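(* Let $d\geq 6$ and let $\sigma_\bullet$ be the sign pattern $(+,-,+,+,\ldots,+,+,-,+)$ of length $d+1$. Then the set $A(\sigma_\bullet,(2,d-4))$ is non-empty and is not connected; more precisely, it is the union of more than one connected component of the set $R_{3,d}$.
   Context: Identify a monic real polynomial $Q_d=x^d+\sum_{j=0}^{d-1}a_jx^j$ with its coefficient vector $(a_{d-1},\ldots,a_0)\in\mathbb{R}^d$. A sign pattern of length $d+1$ is a sequence of $d+1$ symbols $+$/$-$ beginning with $+$; a polynomial with all coefficients non-zero defines the sign pattern $(+,\operatorname{sign}(a_{d-1}),\ldots,\operatorname{sign}(a_0))$. $R_{3,d}\subset\mathbb{R}^d$ is the set of monic degree-$d$ polynomials with all coefficients $a_0,\ldots,a_{d-1}$ non-zero and with no multiple real root. $\sigma_\bullet=(+,-,+,+,\ldots,+,+,-,+)$ denotes the sign pattern of length $d+1$ in which the coefficients of $x^{d-1}$ and $x^1$ are negative and all other coefficients (including the leading one and the constant term) are positive. $A(\sigma_\bullet,(2,d-4))$ is the set of monic degree-$d$ polynomials with all coefficients non-zero and defining the sign pattern $\sigma_\bullet$, having exactly two positive roots and exactly $d-4$ negative roots, all real roots being simple, and (hence) exactly one pair of complex conjugate non-real roots. *)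

theory Defs
  imports "HOL-Analysis.Analysis" "HOL-Computational_Algebra.Polynomial"
begin

text \<open>Coefficient vectors in R^d are represented as functions a :: nat => real
  with a j = 0 for j >= d (so the coordinates are a 0, ..., a (d-1)); the topology is
  the subspace topology of the product topology on nat => real, which on this
  subspace is the Euclidean topology of R^d.\<close>

definition coeff_space :: "nat \<Rightarrow> (nat \<Rightarrow> real) set" where
  "coeff_space d = {a. \<forall>j\<ge>d. a j = 0}"

definition monic_poly :: "nat \<Rightarrow> (nat \<Rightarrow> real) \<Rightarrow> real poly" where
  "monic_poly d a = monom 1 d + (\<Sum>j<d. monom (a j) j)"

definition R3 :: "nat \<Rightarrow> (nat \<Rightarrow> real) set" where
  "R3 d = {a \<in> coeff_space d. (\<forall>j<d. a j \<noteq> 0) \<and>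
            (\<forall>x::real. poly (monic_poly d a) x = 0 \<longrightarrow> order x (monic_poly d a) = 1)}"

definition sigma_bullet :: "nat \<Rightarrow> (nat \<Rightarrow> real) \<Rightarrow> bool" where
  "sigma_bullet d a = (\<forall>j<d. if j = d - 1 \<or> j = 1 then a j < 0 else a j > 0)"

definition pos_roots :: "real poly \<Rightarrow> nat" where
  "pos_roots p = card {x::real. x > 0 \<and> poly p x = 0}"

definition neg_roots :: "real poly \<Rightarrow> nat" where
  "neg_roots p = card {x::real. x < 0 \<and> poly p x = 0}"

definition A_set :: "nat \<Rightarrow> (nat \<Rightarrow> real) set" where
  "A_set d = {a \<in> R3 d. sigma_bullet d a \<and> pos_roots (monic_poly d a) = 2
                 \<and> neg_roots (monic_poly d a) = d - 4}"

end

theory Submission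
  imports Defs "HOL-Real_Asymp.Real_Asymp"
begin

text \<open>
  If a polynomial has only simple real roots, every nearby polynomial has exactly one root close
  to each of them and no other real roots; hence on \<open>R3 d\<close> the numbers of positive and negative
  roots are locally constant, and so is the sign pattern. Thus \<open>A_set d\<close> is open and closed in
  \<open>R3 d\<close>, i.e. a union of components.

  Inside \<open>A_set d\<close> no two roots are opposite: if \<open>r\<close> and \<open>-r\<close> were roots, then for odd \<open>d\<close> the
  even part \<open>E\<close> and the odd part \<open>O\<close> of the polynomial vanish at \<open>r\<close>, and since \<open>E(x)/x\<^sup>d\<^sup>-\<^sup>1\<close>
  decreases and \<open>O(x)/x\<close> increases on \<open>(0,\<infinity>)\<close>, \<open>-r\<close> would be the only negative root (for even
  \<open>d\<close>, \<open>E > 0\<close> on \<open>(0,\<infinity>)\<close>). So whether some positive root is smaller than the modulus of some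
  negative root is also locally constant on \<open>A_set d\<close>, and both cases occur:
  \<open>(x\<^sup>2 - 2Rx + 2R\<^sup>2)(x - e)(x - 2e)(x + 1)\<cdots>(x + d - 4)\<close> has the sign pattern \<open>\<sigma>\<^sub>\<bullet>\<close> both for
  \<open>e\<close> small and \<open>R\<close> large and for \<open>e\<close> large and \<open>R\<close> small.
\<close>

section \<open>Perturbing polynomials with simple real roots\<close>

lemma ex1_root_if_sign_change:
  fixes q :: "real poly"
  assumes "0 < \<epsilon>" and deriv: "\<And>x. \<bar>x - z\<bar> \<le> \<epsilon> \<Longrightarrow> poly (pderiv q) x \<noteq> 0"
    and "poly q (z - \<epsilon>) * poly q (z + \<epsilon>) < 0"
  shows "\<exists>!y. poly q y = 0 \<and> \<bar>y - z\<bar> < \<epsilon>"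
proof -
  obtain y where y: "poly q y = 0" "\<bar>y - z\<bar> < \<epsilon>"
    using poly_IVT[of "z - \<epsilon>" "z + \<epsilon>" q] assms by (auto simp: abs_less_iff)
  have uniq: "u = v"
    if uv: "poly q u = 0" "\<bar>u - z\<bar> < \<epsilon>" "poly q v = 0" "\<bar>v - z\<bar> < \<epsilon>" "u \<le> v" for u v
  proof (rule ccontr)
    assume "u \<noteq> v"
    with uv obtain w where "u < w" "w < v" "poly q v - poly q u = (v - u) * poly (pderiv q) w"
      using poly_MVT[of u v q] by auto
    moreover have "poly (pderiv q) w \<noteq> 0" using deriv[of w] uv \<open>u < w\<close> \<open>w < v\<close> by auto
    ultimately show False using uv \<open>u \<noteq> v\<close> by simp
  qed
  show ?thesis
  proof (rule ex1I[of _ y])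
    fix u assume "poly q u = 0 \<and> \<bar>u - z\<bar> < \<epsilon>"
    then show "u = y" using uniq[of u y] uniq[of y u] y by (cases "u \<le> y") auto
  qed (use y in auto)
qed

lemma sign_change_at_simple_root:
  fixes p :: "real poly"
  assumes "poly p z = 0" "0 < \<epsilon>" and deriv: "\<And>x. \<bar>x - z\<bar> \<le> \<epsilon> \<Longrightarrow> poly (pderiv p) x \<noteq> 0"
  shows "poly p (z - \<epsilon>) * poly p (z + \<epsilon>) < 0"
proof -
  obtain w1 where w1: "z < w1" "w1 < z + \<epsilon>" "poly p (z + \<epsilon>) - poly p z = (z + \<epsilon> - z) * poly (pderiv p) w1"
    using poly_MVT[of z "z + \<epsilon>" p] assms by auto
  obtain w2 where w2: "z - \<epsilon> < w2" "w2 < z" "poly p z - poly p (z - \<epsilon>) = (z - (z - \<epsilon>)) * poly (pderiv p) w2"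
    using poly_MVT[of "z - \<epsilon>" z p] assms by auto
  have "\<not> poly (pderiv p) w2 * poly (pderiv p) w1 < 0"
  proof
    assume "poly (pderiv p) w2 * poly (pderiv p) w1 < 0"
    then obtain w where "w2 < w" "w < w1" "poly (pderiv p) w = 0"
      using poly_IVT[of w2 w1 "pderiv p"] w1 w2 by auto
    with deriv[of w] w1 w2 show False by (auto simp: abs_le_iff)
  qed
  moreover have "poly (pderiv p) w1 \<noteq> 0" "poly (pderiv p) w2 \<noteq> 0"
    using deriv[of w1] deriv[of w2] w1 w2 by auto
  ultimately have "0 < poly (pderiv p) w2 * poly (pderiv p) w1"
    by (metis linorder_neqE_linordered_idom mult_eq_0_iff)
  moreover have "poly p (z + \<epsilon>) = \<epsilon> * poly (pderiv p) w1" "poly p (z - \<epsilon>) = - \<epsilon> * poly (pderiv p) w2"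
    using w1 w2 assms(1) by simp_all
  hence "poly p (z - \<epsilon>) * poly p (z + \<epsilon>) = - (\<epsilon> * \<epsilon>) * (poly (pderiv p) w2 * poly (pderiv p) w1)"
    by (simp add: algebra_simps)
  ultimately show ?thesis using \<open>0 < \<epsilon>\<close> by (simp add: mult_pos_pos mult_neg_pos)
qed

lemma sgn_eq_if_close:
  fixes u v :: real
  assumes "\<bar>v - u\<bar> < \<bar>u\<bar>"
  shows "sgn v = sgn u"
  using assms by (auto simp: sgn_if abs_if split: if_splits)

lemma mult_neg_if_close:
  fixes u v u' v' :: real
  assumes "\<bar>u' - u\<bar> < \<bar>u\<bar>" "\<bar>v' - v\<bar> < \<bar>v\<bar>" "u * v < 0"
  shows "u' * v' < 0"
proof -
  have "sgn (u' * v') = sgn (u * v)"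
    using sgn_eq_if_close[OF assms(1)] sgn_eq_if_close[OF assms(2)] by (simp add: sgn_mult)
  with assms(3) have "sgn (u' * v') = -1" by simp
  then show ?thesis by (cases "u' * v'" "0::real" rule: linorder_cases) auto
qed

lemma compact_abs_lower_bound:
  fixes f :: "real \<Rightarrow> real"
  assumes "compact K" "continuous_on K f" "\<And>x. x \<in> K \<Longrightarrow> f x \<noteq> 0"
  obtains c where "0 < c" "\<And>x. x \<in> K \<Longrightarrow> c \<le> \<bar>f x\<bar>"
proof (cases "K = {}")
  case False
  have "continuous_on K (\<lambda>x. \<bar>f x\<bar>)" using assms(2) by (intro continuous_intros)
  then obtain x0 where "x0 \<in> K" "\<forall>x\<in>K. \<bar>f x0\<bar> \<le> \<bar>f x\<bar>"
    using continuous_attains_inf[OF assms(1) False] by blast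
  with assms(3)[of x0] that[of "\<bar>f x0\<bar>"] show ?thesis by auto
qed (use that[of 1] in auto)

definition roots_close :: "real poly \<Rightarrow> real poly \<Rightarrow> real \<Rightarrow> bool" where
  "roots_close p q \<epsilon> \<longleftrightarrow>
     (\<forall>y. poly q y = 0 \<longrightarrow> (\<exists>z. poly p z = 0 \<and> \<bar>y - z\<bar> < \<epsilon>)) \<and>
     (\<forall>z. poly p z = 0 \<longrightarrow> (\<exists>!y. poly q y = 0 \<and> \<bar>y - z\<bar> < \<epsilon>))"

lemma root_near_root_if_close:
  fixes p :: "real poly"
  assumes "p \<noteq> 0" "0 < \<epsilon>"
  obtains \<eta> where "0 < \<eta>"
    "\<And>q y. (\<And>x. \<bar>x\<bar> \<le> M \<Longrightarrow> \<bar>poly q x - poly p x\<bar> < \<eta>) \<Longrightarrow> poly q y = 0 \<Longrightarrow> \<bar>y\<bar> \<le> M \<Longrightarrow>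
       \<exists>z. poly p z = 0 \<and> \<bar>y - z\<bar> < \<epsilon>"
proof -
  define K where "K = {-M..M} \<inter> (\<Inter>z\<in>{z. poly p z = 0}. {x. \<epsilon> \<le> \<bar>x - z\<bar>})"
  have "compact K" unfolding K_def
    by (intro compact_Int_closed compact_Icc closed_INT ballI closed_Collect_le continuous_intros)
  have K_nonroot: "poly p x \<noteq> 0" if "x \<in> K" for x
  proof
    assume "poly p x = 0"
    moreover from that have "\<forall>z. poly p z = 0 \<longrightarrow> \<epsilon> \<le> \<bar>x - z\<bar>" by (simp add: K_def)
    ultimately have "\<epsilon> \<le> \<bar>x - x\<bar>" by blast
    with \<open>0 < \<epsilon>\<close> show False by simp
  qed
  obtain \<eta> where "0 < \<eta>" and \<eta>: "\<And>x. x \<in> K \<Longrightarrow> \<eta> \<le> \<bar>poly p x\<bar>"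
    using compact_abs_lower_bound[OF \<open>compact K\<close> continuous_on_poly[OF continuous_on_id] K_nonroot] by blast
  show ?thesis
  proof (rule that[OF \<open>0 < \<eta>\<close>], rule ccontr)
    fix q y assume close: "\<And>x. \<bar>x\<bar> \<le> M \<Longrightarrow> \<bar>poly q x - poly p x\<bar> < \<eta>"
      and "poly q y = 0" "\<bar>y\<bar> \<le> M" "\<not> (\<exists>z. poly p z = 0 \<and> \<bar>y - z\<bar> < \<epsilon>)"
    then have "y \<in> K" unfolding K_def by (auto simp: abs_le_iff not_less)
    with \<eta>[of y] close[of y] \<open>poly q y = 0\<close> \<open>\<bar>y\<bar> \<le> M\<close> show False by auto
  qed
qed

lemma lower_bounds_near_simple_roots:
  fixes p :: "real poly"
  assumes "p \<noteq> 0" "0 < \<epsilon>"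
    and sep: "\<And>z z'. poly p z = 0 \<Longrightarrow> poly p z' = 0 \<Longrightarrow> z \<noteq> z' \<Longrightarrow> 2 * \<epsilon> < \<bar>z - z'\<bar>"
    and deriv: "\<And>z x. poly p z = 0 \<Longrightarrow> \<bar>x - z\<bar> \<le> \<epsilon> \<Longrightarrow> poly (pderiv p) x \<noteq> 0"
  obtains c where "0 < c"
    "\<And>z x. poly p z = 0 \<Longrightarrow> \<bar>x - z\<bar> \<le> \<epsilon> \<Longrightarrow> c \<le> \<bar>poly (pderiv p) x\<bar>"
    "\<And>z h. poly p z = 0 \<Longrightarrow> \<bar>h\<bar> = \<epsilon> \<Longrightarrow> c \<le> \<bar>poly p (z + h)\<bar>"
proof -
  define D where "D = (\<Union>z\<in>{z. poly p z = 0}. {z - \<epsilon>..z + \<epsilon>})"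
  define E where "E = (\<Union>z\<in>{z. poly p z = 0}. {z - \<epsilon>, z + \<epsilon>})"
  have "finite {z. poly p z = 0}" using \<open>p \<noteq> 0\<close> by (rule poly_roots_finite)
  then have "compact D" "compact E" unfolding D_def E_def
    by (auto intro: compact_UN compact_Icc finite_imp_compact)
  have "poly (pderiv p) x \<noteq> 0" if "x \<in> D" for x
    using that deriv by (auto simp: D_def abs_le_iff)
  then obtain c where "0 < c" and c: "\<And>x. x \<in> D \<Longrightarrow> c \<le> \<bar>poly (pderiv p) x\<bar>"
    using compact_abs_lower_bound[OF \<open>compact D\<close> continuous_on_poly[OF continuous_on_id]] by blast
  have "poly p x \<noteq> 0" if "x \<in> E" for x
  proof
    assume "poly p x = 0"
    from that obtain z where "poly p z = 0" "x = z - \<epsilon> \<or> x = z + \<epsilon>" by (auto simp: E_def)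
    with sep[OF \<open>poly p x = 0\<close>] \<open>0 < \<epsilon>\<close> show False by (cases "x = z") force+
  qed
  then obtain c' where "0 < c'" and c': "\<And>x. x \<in> E \<Longrightarrow> c' \<le> \<bar>poly p x\<bar>"
    using compact_abs_lower_bound[OF \<open>compact E\<close> continuous_on_poly[OF continuous_on_id]] by blast
  show ?thesis
  proof (rule that[of "min c c'"])
    fix z x assume "poly p z = 0" "\<bar>x - z\<bar> \<le> \<epsilon>"
    then have "x \<in> D" by (auto simp: D_def abs_le_iff)
    with c show "min c c' \<le> \<bar>poly (pderiv p) x\<bar>" by force
  next
    fix z h assume "poly p z = 0" "\<bar>h\<bar> = \<epsilon>"
    then have "z + h \<in> E" by (auto simp: E_def abs_if split: if_splits)
    with c' show "min c c' \<le> \<bar>poly p (z + h)\<bar>" by force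
  qed (use \<open>0 < c\<close> \<open>0 < c'\<close> in simp)
qed

lemma ex1_root_near_simple_root_if_C1_close:
  fixes p :: "real poly"
  assumes "0 < \<epsilon>"
    and inside: "\<And>z. poly p z = 0 \<Longrightarrow> \<bar>z\<bar> + \<epsilon> \<le> M"
    and sep: "\<And>z z'. poly p z = 0 \<Longrightarrow> poly p z' = 0 \<Longrightarrow> z \<noteq> z' \<Longrightarrow> 2 * \<epsilon> < \<bar>z - z'\<bar>"
    and deriv: "\<And>z x. poly p z = 0 \<Longrightarrow> \<bar>x - z\<bar> \<le> \<epsilon> \<Longrightarrow> poly (pderiv p) x \<noteq> 0"
  obtains \<eta> where "0 < \<eta>"
    "\<And>q z. (\<And>x. \<bar>x\<bar> \<le> M \<Longrightarrow> \<bar>poly q x - poly p x\<bar> < \<eta> \<and> \<bar>poly (pderiv q) x - poly (pderiv p) x\<bar> < \<eta>) \<Longrightarrow>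
       poly p z = 0 \<Longrightarrow> \<exists>!y. poly q y = 0 \<and> \<bar>y - z\<bar> < \<epsilon>"
proof -
  have "p \<noteq> 0" using inside[of "M + 1"] \<open>0 < \<epsilon>\<close> by auto
  obtain c where "0 < c"
    and c_deriv: "\<And>z x. poly p z = 0 \<Longrightarrow> \<bar>x - z\<bar> \<le> \<epsilon> \<Longrightarrow> c \<le> \<bar>poly (pderiv p) x\<bar>"
    and c_edge: "\<And>z h. poly p z = 0 \<Longrightarrow> \<bar>h\<bar> = \<epsilon> \<Longrightarrow> c \<le> \<bar>poly p (z + h)\<bar>"
    using lower_bounds_near_simple_roots[OF \<open>p \<noteq> 0\<close> \<open>0 < \<epsilon>\<close>] sep deriv by blast
  show ?thesis
  proof (rule that[OF \<open>0 < c\<close>])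
    fix q z
    assume close: "\<And>x. \<bar>x\<bar> \<le> M \<Longrightarrow> \<bar>poly q x - poly p x\<bar> < c \<and> \<bar>poly (pderiv q) x - poly (pderiv p) x\<bar> < c"
      and "poly p z = 0"
    have M: "\<bar>x\<bar> \<le> M" if "\<bar>x - z\<bar> \<le> \<epsilon>" for x
      using inside[OF \<open>poly p z = 0\<close>] that by linarith
    show "\<exists>!y. poly q y = 0 \<and> \<bar>y - z\<bar> < \<epsilon>"
    proof (rule ex1_root_if_sign_change[OF \<open>0 < \<epsilon>\<close>])
      fix x assume "\<bar>x - z\<bar> \<le> \<epsilon>"
      with c_deriv[OF \<open>poly p z = 0\<close>] close[OF M] show "poly (pderiv q) x \<noteq> 0" by force
    next
      have "\<bar>poly q (z + h) - poly p (z + h)\<bar> < \<bar>poly p (z + h)\<bar>" if "\<bar>h\<bar> = \<epsilon>" for h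
        using c_edge[OF \<open>poly p z = 0\<close> that] close[OF M, of "z + h"] that by simp
      from this[of "- \<epsilon>"] this[of \<epsilon>] \<open>0 < \<epsilon>\<close>
      show "poly q (z - \<epsilon>) * poly q (z + \<epsilon>) < 0"
        using mult_neg_if_close sign_change_at_simple_root[OF \<open>poly p z = 0\<close> \<open>0 < \<epsilon>\<close>]
          deriv[OF \<open>poly p z = 0\<close>] by simp
    qed
  qed
qed

lemma roots_close_if_C1_close:
  fixes p :: "real poly"
  assumes "p \<noteq> 0" "0 < \<epsilon>"
    and inside: "\<And>z. poly p z = 0 \<Longrightarrow> \<bar>z\<bar> + \<epsilon> \<le> M"
    and sep: "\<And>z z'. poly p z = 0 \<Longrightarrow> poly p z' = 0 \<Longrightarrow> z \<noteq> z' \<Longrightarrow> 2 * \<epsilon> < \<bar>z - z'\<bar>"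
    and deriv: "\<And>z x. poly p z = 0 \<Longrightarrow> \<bar>x - z\<bar> \<le> \<epsilon> \<Longrightarrow> poly (pderiv p) x \<noteq> 0"
  shows "\<exists>\<eta>>0. \<forall>q. (\<forall>x. \<bar>x\<bar> \<le> M \<longrightarrow> \<bar>poly q x - poly p x\<bar> < \<eta> \<and>
                              \<bar>poly (pderiv q) x - poly (pderiv p) x\<bar> < \<eta>) \<longrightarrow>
                   (\<forall>y. poly q y = 0 \<longrightarrow> \<bar>y\<bar> \<le> M) \<longrightarrow> roots_close p q \<epsilon>"
proof -
  obtain \<eta>1 where "0 < \<eta>1" and \<eta>1: "\<And>q y. (\<And>x. \<bar>x\<bar> \<le> M \<Longrightarrow> \<bar>poly q x - poly p x\<bar> < \<eta>1) \<Longrightarrow>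
      poly q y = 0 \<Longrightarrow> \<bar>y\<bar> \<le> M \<Longrightarrow> \<exists>z. poly p z = 0 \<and> \<bar>y - z\<bar> < \<epsilon>"
    using root_near_root_if_close[OF assms(1,2)] by blast
  obtain \<eta>2 where "0 < \<eta>2" and \<eta>2: "\<And>q z. (\<And>x. \<bar>x\<bar> \<le> M \<Longrightarrow> \<bar>poly q x - poly p x\<bar> < \<eta>2 \<and>
      \<bar>poly (pderiv q) x - poly (pderiv p) x\<bar> < \<eta>2) \<Longrightarrow> poly p z = 0 \<Longrightarrow> \<exists>!y. poly q y = 0 \<and> \<bar>y - z\<bar> < \<epsilon>"
    by (rule ex1_root_near_simple_root_if_C1_close[of \<epsilon> p M]) (use assms in auto)
  have "roots_close p q \<epsilon>"
    if "\<forall>x. \<bar>x\<bar> \<le> M \<longrightarrow> \<bar>poly q x - poly p x\<bar> < min \<eta>1 \<eta>2 \<and>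
                           \<bar>poly (pderiv q) x - poly (pderiv p) x\<bar> < min \<eta>1 \<eta>2"
      and "\<forall>y. poly q y = 0 \<longrightarrow> \<bar>y\<bar> \<le> M" for q
    unfolding roots_close_def using that \<eta>1[of q] \<eta>2[of q] by simp
  then show ?thesis using \<open>0 < \<eta>1\<close> \<open>0 < \<eta>2\<close> by (intro exI[of _ "min \<eta>1 \<eta>2"]) auto
qed

lemma eventually_less_at_right_0:
  fixes c :: real
  assumes "0 < c"
  shows "\<forall>\<^sub>F x in at_right 0. x < c"
  using assms by (auto simp: eventually_at_right_field intro!: exI[of _ c])

lemma eventually_root_gaps:
  fixes p :: "real poly"
  assumes "p \<noteq> 0"
  shows "\<forall>\<^sub>F \<epsilon> in at_right 0. \<forall>z z'. poly p z = 0 \<longrightarrow> poly p z' = 0 \<longrightarrow>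
           (z \<noteq> z' \<longrightarrow> 2 * \<epsilon> < \<bar>z - z'\<bar>) \<and> (z + z' \<noteq> 0 \<longrightarrow> 2 * \<epsilon> < \<bar>z + z'\<bar>)"
proof -
  define Z where "Z = {z. poly p z = 0}"
  have "finite Z" unfolding Z_def using poly_roots_finite[OF assms] .
  have gap: "\<forall>\<^sub>F \<epsilon> in at_right 0. t \<noteq> 0 \<longrightarrow> 2 * \<epsilon> < \<bar>t\<bar>" for t :: real
  proof (cases "t = 0")
    case False
    then show ?thesis
      using eventually_less_at_right_0[of "\<bar>t\<bar> / 2"] by (auto elim: eventually_mono)
  qed simp
  have "\<forall>\<^sub>F \<epsilon> in at_right 0. \<forall>z\<in>Z. \<forall>z'\<in>Z.
          (z - z' \<noteq> 0 \<longrightarrow> 2 * \<epsilon> < \<bar>z - z'\<bar>) \<and> (z + z' \<noteq> 0 \<longrightarrow> 2 * \<epsilon> < \<bar>z + z'\<bar>)"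
    using \<open>finite Z\<close> gap by (intro eventually_ball_finite ballI eventually_conj) auto
  then show ?thesis by (rule eventually_mono) (simp add: Z_def)
qed

lemma eventually_pderiv_nonzero_near_roots:
  fixes p :: "real poly"
  assumes "p \<noteq> 0" and simple: "\<And>z. poly p z = 0 \<Longrightarrow> poly (pderiv p) z \<noteq> 0"
  shows "\<forall>\<^sub>F \<epsilon> in at_right 0. \<forall>z. poly p z = 0 \<longrightarrow> (\<forall>x. \<bar>x - z\<bar> \<le> \<epsilon> \<longrightarrow> poly (pderiv p) x \<noteq> 0)"
proof -
  have "\<forall>\<^sub>F \<epsilon> in at_right 0. \<forall>z\<in>{z. poly p z = 0}. \<forall>x. \<bar>x - z\<bar> \<le> \<epsilon> \<longrightarrow> poly (pderiv p) x \<noteq> 0"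
  proof (intro eventually_ball_finite ballI)
    fix z assume "z \<in> {z. poly p z = 0}"
    then obtain e where "0 < e" and e: "\<And>x. dist z x < e \<Longrightarrow> poly (pderiv p) x \<noteq> 0"
      using continuous_at_avoid[of z "poly (pderiv p)" 0] simple by auto
    show "\<forall>\<^sub>F \<epsilon> in at_right 0. \<forall>x. \<bar>x - z\<bar> \<le> \<epsilon> \<longrightarrow> poly (pderiv p) x \<noteq> 0"
      using eventually_less_at_right_0[OF \<open>0 < e\<close>]
      by eventually_elim (use e in \<open>auto simp: dist_real_def abs_minus_commute\<close>)
  qed (use poly_roots_finite[OF \<open>p \<noteq> 0\<close>] in simp)
  then show ?thesis by simp
qed

lemma eventually_roots_close:
  fixes p :: "real poly"
  assumes "p \<noteq> 0" and simple: "\<And>z. poly p z = 0 \<Longrightarrow> poly (pderiv p) z \<noteq> 0"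
    and bounded: "\<And>z. poly p z = 0 \<Longrightarrow> \<bar>z\<bar> < M"
  shows "\<forall>\<^sub>F \<epsilon> in at_right 0. \<exists>\<eta>>0. \<forall>q.
           (\<forall>x. \<bar>x\<bar> \<le> M \<longrightarrow> \<bar>poly q x - poly p x\<bar> < \<eta> \<and>
                          \<bar>poly (pderiv q) x - poly (pderiv p) x\<bar> < \<eta>) \<longrightarrow>
           (\<forall>y. poly q y = 0 \<longrightarrow> \<bar>y\<bar> \<le> M) \<longrightarrow> roots_close p q \<epsilon>"
proof -
  have "\<forall>\<^sub>F \<epsilon> in at_right 0. \<forall>z\<in>{z. poly p z = 0}. \<bar>z\<bar> + \<epsilon> \<le> M"
  proof (intro eventually_ball_finite ballI)
    fix z assume "z \<in> {z. poly p z = 0}"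
    with bounded show "\<forall>\<^sub>F \<epsilon> in at_right 0. \<bar>z\<bar> + \<epsilon> \<le> M"
      by (auto intro: eventually_mono[OF eventually_less_at_right_0[of "M - \<bar>z\<bar>"]])
  qed (use poly_roots_finite[OF \<open>p \<noteq> 0\<close>] in simp)
  moreover have "\<forall>\<^sub>F \<epsilon> in at_right 0. \<forall>z. poly p z = 0 \<longrightarrow> (\<forall>x. \<bar>x - z\<bar> \<le> \<epsilon> \<longrightarrow> poly (pderiv p) x \<noteq> 0)"
    using \<open>p \<noteq> 0\<close> simple by (rule eventually_pderiv_nonzero_near_roots)
  ultimately show ?thesis
    using eventually_root_gaps[OF \<open>p \<noteq> 0\<close>] eventually_at_right_less[of 0]
  proof eventually_elim
    case (elim \<epsilon>)
    then show ?case using roots_close_if_C1_close[OF \<open>p \<noteq> 0\<close>, of \<epsilon> M] by auto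
  qed
qed

lemma roots_close_bij:
  assumes close: "roots_close p q \<epsilon>"
    and sep: "\<And>z z'. poly p z = 0 \<Longrightarrow> poly p z' = 0 \<Longrightarrow> z \<noteq> z' \<Longrightarrow> 2 * \<epsilon> < \<bar>z - z'\<bar>"
  obtains g where "bij_betw g {y. poly q y = 0} {z. poly p z = 0}" "\<And>y. poly q y = 0 \<Longrightarrow> \<bar>y - g y\<bar> < \<epsilon>"
proof
  define g where "g y = (SOME z. poly p z = 0 \<and> \<bar>y - z\<bar> < \<epsilon>)" for y
  have g: "poly p (g y) = 0 \<and> \<bar>y - g y\<bar> < \<epsilon>" if "poly q y = 0" for y
  proof -
    from close that have "\<exists>z. poly p z = 0 \<and> \<bar>y - z\<bar> < \<epsilon>" unfolding roots_close_def by blast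
    then show ?thesis unfolding g_def by (rule someI_ex)
  qed
  then show "\<bar>y - g y\<bar> < \<epsilon>" if "poly q y = 0" for y using that by blast
  have unique: "y = y'" if "poly q y = 0" "poly q y' = 0" "\<bar>y - z\<bar> < \<epsilon>" "\<bar>y' - z\<bar> < \<epsilon>" "poly p z = 0"
    for y y' z
  proof -
    from close \<open>poly p z = 0\<close> have "\<exists>!y. poly q y = 0 \<and> \<bar>y - z\<bar> < \<epsilon>" unfolding roots_close_def by blast
    with that show ?thesis by (elim ex1E) blast
  qed
  have "inj_on g {y. poly q y = 0}"
  proof (rule inj_onI)
    fix y y' assume "y \<in> {y. poly q y = 0}" "y' \<in> {y. poly q y = 0}" "g y = g y'"
    with g[of y] g[of y'] show "y = y'" by (intro unique[of y y' "g y"]) auto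
  qed
  moreover have "g ` {y. poly q y = 0} = {z. poly p z = 0}"
  proof (intro equalityI subsetI)
    fix z assume "z \<in> {z. poly p z = 0}"
    then obtain y where "poly q y = 0" "\<bar>y - z\<bar> < \<epsilon>" using close unfolding roots_close_def by blast
    moreover have "g y = z"
    proof (rule ccontr)
      assume "g y \<noteq> z"
      with sep[of "g y" z] g[OF \<open>poly q y = 0\<close>] \<open>z \<in> {z. poly p z = 0}\<close>
      have "2 * \<epsilon> < \<bar>g y - z\<bar>" by simp
      with g[OF \<open>poly q y = 0\<close>] \<open>\<bar>y - z\<bar> < \<epsilon>\<close> show False by linarith
    qed
    ultimately show "z \<in> g ` {y. poly q y = 0}" by blast
  qed (use g in auto)
  ultimately show "bij_betw g {y. poly q y = 0} {z. poly p z = 0}" by (simp add: bij_betw_def)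
qed

lemma card_Collect_eq_if_bij_betw:
  assumes bij: "bij_betw g A B" and PQ: "\<And>x. x \<in> A \<Longrightarrow> P x \<longleftrightarrow> Q (g x)"
  shows "card {x \<in> A. P x} = card {y \<in> B. Q y}"
proof (rule bij_betw_same_card[of g])
  have "inj_on g {x \<in> A. P x}" using bij by (auto simp: bij_betw_def intro: inj_on_subset)
  moreover have "g ` {x \<in> A. P x} = {y \<in> B. Q y}"
  proof (intro equalityI subsetI)
    fix y assume "y \<in> {y \<in> B. Q y}"
    then obtain x where "x \<in> A" "y = g x" using bij by (auto simp: bij_betw_def)
    with PQ[of x] \<open>y \<in> {y \<in> B. Q y}\<close> show "y \<in> g ` {x \<in> A. P x}" by auto
  qed (use bij PQ in \<open>auto simp: bij_betw_def\<close>)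
  ultimately show "bij_betw g {x \<in> A. P x} {y \<in> B. Q y}" by (simp add: bij_betw_def)
qed

lemma root_counts_eq_if_bij_betw:
  assumes bij: "bij_betw g {y. poly q y = 0} {z. poly p z = 0}"
    and near: "\<And>y. poly q y = 0 \<Longrightarrow> \<bar>y - g y\<bar> < \<epsilon>"
    and away: "\<And>z. poly p z = 0 \<Longrightarrow> \<epsilon> < \<bar>z\<bar>"
  shows "pos_roots q = pos_roots p" "neg_roots q = neg_roots p"
proof -
  have "sgn y = sgn (g y)" if "y \<in> {y. poly q y = 0}" for y
  proof (rule sgn_eq_if_close)
    from that have "poly p (g y) = 0" using bij_betwE[OF bij] by blast
    with near[of y] away[of "g y"] that show "\<bar>y - g y\<bar> < \<bar>g y\<bar>" by simp
  qed
  then have sign: "(0 < y \<longleftrightarrow> 0 < g y) \<and> (y < 0 \<longleftrightarrow> g y < 0)" if "y \<in> {y. poly q y = 0}" for y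
    using that sgn_greater[of y] sgn_greater[of "g y"] sgn_less[of y] sgn_less[of "g y"] by metis
  have "card {y \<in> {y. poly q y = 0}. 0 < y} = card {z \<in> {z. poly p z = 0}. 0 < z}"
    by (rule card_Collect_eq_if_bij_betw[OF bij]) (use sign in blast)
  moreover have "card {y \<in> {y. poly q y = 0}. y < 0} = card {z \<in> {z. poly p z = 0}. z < 0}"
    by (rule card_Collect_eq_if_bij_betw[OF bij]) (use sign in blast)
  ultimately show "pos_roots q = pos_roots p" "neg_roots q = neg_roots p"
    unfolding pos_roots_def neg_roots_def by (simp_all add: conj_commute)
qed

definition small_pos_root :: "real poly \<Rightarrow> bool" where
  "small_pos_root p \<longleftrightarrow> (\<exists>y z. poly p y = 0 \<and> poly p z = 0 \<and> 0 < y \<and> y < - z)"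

lemma small_pos_root_eq_if_bij_betw:
  assumes bij: "bij_betw g {y. poly q y = 0} {z. poly p z = 0}"
    and near: "\<And>y. poly q y = 0 \<Longrightarrow> \<bar>y - g y\<bar> < \<epsilon>"
    and away: "\<And>z z'. poly p z = 0 \<Longrightarrow> poly p z' = 0 \<Longrightarrow> 2 * \<epsilon> < \<bar>z + z'\<bar>"
  shows "small_pos_root q \<longleftrightarrow> small_pos_root p"
proof
  assume "small_pos_root q"
  then obtain y y' where y: "poly q y = 0" "poly q y' = 0" "0 < y" "y < - y'"
    unfolding small_pos_root_def by blast
  have roots: "poly p (g y) = 0" "poly p (g y') = 0" using y bij_betwE[OF bij] by auto
  have "sgn (g y) = sgn y"
    using sgn_eq_if_close[of y "g y"] near[OF y(1)] away[OF roots(1) roots(1)] by simp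
  then have "0 < g y" using \<open>0 < y\<close> by (metis sgn_greater)
  have "g y + g y' < 2 * \<epsilon>" using near[OF y(1)] near[OF y(2)] y(4) by (simp add: abs_less_iff)
  with away[OF roots] have "g y < - g y'" by (simp add: abs_if split: if_splits)
  with roots \<open>0 < g y\<close> show "small_pos_root p" unfolding small_pos_root_def by blast
next
  assume "small_pos_root p"
  then obtain z z' where z: "poly p z = 0" "poly p z' = 0" "0 < z" "z < - z'"
    unfolding small_pos_root_def by blast
  then obtain y y' where y: "poly q y = 0" "poly q y' = 0" and "z = g y" "z' = g y'"
    using bij unfolding bij_betw_def by blast
  have "sgn y = sgn z"
    using sgn_eq_if_close[of y z] near[OF y(1)] away[OF z(1) z(1)] \<open>z = g y\<close> by simp
  then have "0 < y" using \<open>0 < z\<close> by (metis sgn_greater)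
  have "z + z' < - (2 * \<epsilon>)" using away[OF z(1,2)] z(4) by (simp add: abs_if split: if_splits)
  then have "y < - y'" using near[OF y(1)] near[OF y(2)] \<open>z = g y\<close> \<open>z' = g y'\<close> by (simp add: abs_less_iff)
  with y \<open>0 < y\<close> show "small_pos_root q" unfolding small_pos_root_def by blast
qed

section \<open>Monic polynomials of degree \<open>d\<close>\<close>

lemma pderiv_sum: "pderiv (sum f A) = (\<Sum>x\<in>A. pderiv (f x))"
  by (induction A rule: infinite_finite_induct) (auto simp: pderiv_add)

lemma coeff_monic_poly:
  "coeff (monic_poly d a) n = (if n = d then 1 else if n < d then a n else 0)"
  by (simp add: monic_poly_def coeff_sum coeff_monom sum.delta)

lemma degree_monic_poly [simp]: "degree (monic_poly d a) = d"
  by (rule antisym[OF degree_le le_degree]) (auto simp: coeff_monic_poly)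

lemma lead_coeff_monic_poly [simp]: "lead_coeff (monic_poly d a) = 1"
  by (simp add: coeff_monic_poly)

lemma monic_poly_nonzero [simp]: "monic_poly d a \<noteq> 0"
  using lead_coeff_monic_poly[of d a] by (metis leading_coeff_0_iff zero_neq_one)

lemma monic_poly_coeffs:
  assumes "degree p = d" "lead_coeff p = 1"
  shows "monic_poly d (\<lambda>j. if j < d then coeff p j else 0) = p"
  by (rule poly_eqI) (use assms in \<open>auto simp: coeff_monic_poly coeff_eq_0\<close>)

lemma poly_monic_poly: "poly (monic_poly d a) x = x ^ d + (\<Sum>j<d. a j * x ^ j)"
  by (simp add: monic_poly_def poly_sum poly_monom)

lemma poly_pderiv_monic_poly:
  "poly (pderiv (monic_poly d a)) x = of_nat d * x ^ (d - 1) + (\<Sum>j<d. of_nat j * a j * x ^ (j - 1))"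
  by (simp add: monic_poly_def pderiv_add pderiv_sum pderiv_monom poly_sum poly_monom)

lemma poly_monic_poly_0: "0 < d \<Longrightarrow> poly (monic_poly d a) 0 = a 0"
  by (simp add: poly_0_coeff_0 coeff_monic_poly)

lemma order_eq_1_iff_pderiv:
  fixes p :: "real poly"
  assumes "p \<noteq> 0" "poly p x = 0"
  shows "order x p = 1 \<longleftrightarrow> poly (pderiv p) x \<noteq> 0"
proof -
  have "pderiv p \<noteq> 0"
  proof
    assume "pderiv p = 0"
    then obtain c where "p = [:c:]" using pderiv_eq_0_iff degree0_coeffs by blast
    with assms show False by simp
  qed
  then show ?thesis using order_pderiv[OF assms] order_eq_0_iff by simp
qed

lemma R3_roots_simple_nonzero:
  assumes "a \<in> R3 d" "0 < d" "poly (monic_poly d a) z = 0"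
  shows "poly (pderiv (monic_poly d a)) z \<noteq> 0" "z \<noteq> 0"
  using assms order_eq_1_iff_pderiv[OF monic_poly_nonzero assms(3)] poly_monic_poly_0[OF assms(2), of a]
  by (auto simp: R3_def)

lemma monic_poly_root_bound:
  assumes "poly (monic_poly d b) y = 0"
  shows "\<bar>y\<bar> \<le> 1 + (\<Sum>j<d. \<bar>b j\<bar>)"
proof (rule ccontr)
  define S where "S = (\<Sum>j<d. \<bar>b j\<bar>)"
  assume "\<not> \<bar>y\<bar> \<le> 1 + (\<Sum>j<d. \<bar>b j\<bar>)"
  hence y: "1 + S < \<bar>y\<bar>" by (simp add: S_def)
  have "0 \<le> S" by (simp add: S_def sum_nonneg)
  have "0 < d" using assms by (cases d) (auto simp: poly_monic_poly)
  have "\<bar>y\<bar> ^ d = \<bar>\<Sum>j<d. b j * y ^ j\<bar>"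
    using assms unfolding poly_monic_poly by (metis abs_minus_cancel add_eq_0_iff power_abs)
  also have "\<dots> \<le> (\<Sum>j<d. \<bar>b j\<bar> * \<bar>y\<bar> ^ j)"
    by (rule order_trans[OF sum_abs]) (simp add: abs_mult power_abs)
  also have "\<dots> \<le> (\<Sum>j<d. \<bar>b j\<bar> * \<bar>y\<bar> ^ (d - 1))"
    using y \<open>0 \<le> S\<close> by (intro sum_mono mult_left_mono power_increasing) auto
  also have "\<dots> = S * \<bar>y\<bar> ^ (d - 1)" by (simp add: S_def sum_distrib_right)
  also have "\<dots> < \<bar>y\<bar> * \<bar>y\<bar> ^ (d - 1)"
    using y \<open>0 \<le> S\<close> by (intro mult_strict_right_mono) auto
  also have "\<dots> = \<bar>y\<bar> ^ d" using \<open>0 < d\<close> by (simp add: power_eq_if)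
  finally show False by simp
qed

lemma monic_poly_diff_bound:
  assumes "\<forall>j<d. \<bar>b j - a j\<bar> \<le> \<delta>" "\<bar>x\<bar> \<le> M" "1 \<le> M"
  shows "\<bar>poly (monic_poly d b) x - poly (monic_poly d a) x\<bar> \<le> real d * real d * \<delta> * M ^ d"
    and "\<bar>poly (pderiv (monic_poly d b)) x - poly (pderiv (monic_poly d a)) x\<bar> \<le> real d * real d * \<delta> * M ^ d"
proof -
  have power_le: "\<bar>x\<bar> ^ k \<le> M ^ d" if "k \<le> d" for k
    using assms(2,3) that by (meson order_trans power_increasing power_mono abs_ge_zero)
  show "\<bar>poly (monic_poly d b) x - poly (monic_poly d a) x\<bar> \<le> real d * real d * \<delta> * M ^ d"
  proof (cases "d = 0")
    case False
    have "\<bar>poly (monic_poly d b) x - poly (monic_poly d a) x\<bar> = \<bar>\<Sum>j<d. (b j - a j) * x ^ j\<bar>"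
      unfolding poly_monic_poly by (simp add: sum_subtractf algebra_simps)
    also have "\<dots> \<le> (\<Sum>j<d. \<bar>b j - a j\<bar> * \<bar>x\<bar> ^ j)"
      by (rule order_trans[OF sum_abs]) (simp add: abs_mult power_abs)
    also have "\<dots> \<le> (\<Sum>j<d. \<delta> * M ^ d)"
      using assms(1) power_le by (intro sum_mono mult_mono) (auto intro: order_trans[OF abs_ge_zero])
    also have "\<dots> = real d * (\<delta> * M ^ d)" by simp
    also have "\<dots> \<le> real d * real d * (\<delta> * M ^ d)"
    proof -
      have "0 \<le> \<delta>" using assms(1) False by (meson abs_ge_zero order_trans neq0_conv)
      with False \<open>1 \<le> M\<close> show ?thesis by (intro mult_right_mono) auto
    qed
    finally show ?thesis by (simp add: mult.assoc)
  next
    case True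
    then show ?thesis by (simp add: poly_monic_poly)
  qed
  have "\<bar>poly (pderiv (monic_poly d b)) x - poly (pderiv (monic_poly d a)) x\<bar>
        = \<bar>\<Sum>j<d. of_nat j * ((b j - a j) * x ^ (j - 1))\<bar>"
    unfolding poly_pderiv_monic_poly by (simp add: sum_subtractf algebra_simps)
  also have "\<dots> \<le> (\<Sum>j<d. of_nat j * (\<bar>b j - a j\<bar> * \<bar>x\<bar> ^ (j - 1)))"
    by (rule order_trans[OF sum_abs]) (simp add: abs_mult power_abs)
  also have "\<dots> \<le> (\<Sum>j<d. of_nat d * (\<delta> * M ^ d))"
    using assms(1) power_le by (intro sum_mono mult_mono) (auto intro: order_trans[OF abs_ge_zero])
  also have "\<dots> = real d * real d * \<delta> * M ^ d" by simp
  finally show "\<bar>poly (pderiv (monic_poly d b)) x - poly (pderiv (monic_poly d a)) x\<bar> \<le> real d * real d * \<delta> * M ^ d" .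
qed

lemma monic_poly_C1_close:
  assumes "0 < d" "0 < \<eta>"
  obtains \<delta> where "0 < \<delta>"
    "\<And>b x. \<forall>j<d. \<bar>b j - a j\<bar> < \<delta> \<Longrightarrow> \<bar>x\<bar> \<le> 2 + (\<Sum>j<d. \<bar>a j\<bar>) \<Longrightarrow>
       \<bar>poly (monic_poly d b) x - poly (monic_poly d a) x\<bar> < \<eta> \<and>
       \<bar>poly (pderiv (monic_poly d b)) x - poly (pderiv (monic_poly d a)) x\<bar> < \<eta>"
    "\<And>b y. \<forall>j<d. \<bar>b j - a j\<bar> < \<delta> \<Longrightarrow> poly (monic_poly d b) y = 0 \<Longrightarrow> \<bar>y\<bar> \<le> 2 + (\<Sum>j<d. \<bar>a j\<bar>)"
proof -
  define M where "M = 2 + (\<Sum>j<d. \<bar>a j\<bar>)"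
  have "1 \<le> M" by (simp add: M_def sum_nonneg add_increasing2)
  define K where "K = 2 * real d * real d * M ^ d"
  have "0 < K" using \<open>0 < d\<close> \<open>1 \<le> M\<close> by (simp add: K_def)
  define \<delta> where "\<delta> = min (1 / (2 * real d)) (\<eta> / K)"
  show ?thesis
  proof (rule that[of \<delta>, folded M_def])
    show "0 < \<delta>" using \<open>0 < d\<close> \<open>0 < \<eta>\<close> \<open>0 < K\<close> by (simp add: \<delta>_def)
  next
    fix b x assume b: "\<forall>j<d. \<bar>b j - a j\<bar> < \<delta>" and "\<bar>x\<bar> \<le> M"
    have "\<delta> \<le> \<eta> / K" by (simp add: \<delta>_def)
    hence "\<delta> * K \<le> \<eta>" using \<open>0 < K\<close> by (simp add: pos_le_divide_eq)
    hence "real d * real d * \<delta> * M ^ d \<le> \<eta> / 2" by (simp add: K_def algebra_simps)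
    moreover have b_le: "\<forall>j<d. \<bar>b j - a j\<bar> \<le> \<delta>" using b by auto
    ultimately show "\<bar>poly (monic_poly d b) x - poly (monic_poly d a) x\<bar> < \<eta> \<and>
        \<bar>poly (pderiv (monic_poly d b)) x - poly (pderiv (monic_poly d a)) x\<bar> < \<eta>"
      using monic_poly_diff_bound[OF b_le \<open>\<bar>x\<bar> \<le> M\<close> \<open>1 \<le> M\<close>] \<open>0 < \<eta>\<close> by linarith
  next
    fix b y assume b: "\<forall>j<d. \<bar>b j - a j\<bar> < \<delta>" and "poly (monic_poly d b) y = 0"
    have "(\<Sum>j<d. \<bar>b j\<bar>) \<le> (\<Sum>j<d. \<bar>a j\<bar> + \<delta>)"
      using b by (intro sum_mono) (auto simp: abs_le_iff abs_less_iff)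
    also have "\<dots> = (\<Sum>j<d. \<bar>a j\<bar>) + real d * \<delta>" by (simp add: sum.distrib)
    also have "\<dots> \<le> (\<Sum>j<d. \<bar>a j\<bar>) + 1"
    proof -
      have "\<delta> \<le> 1 / (2 * real d)" by (simp add: \<delta>_def)
      with \<open>0 < d\<close> show ?thesis by (simp add: field_simps)
    qed
    finally show "\<bar>y\<bar> \<le> M"
      using monic_poly_root_bound[OF \<open>poly (monic_poly d b) y = 0\<close>] by (simp add: M_def)
  qed
qed

lemma eventually_roots_close_monic_poly:
  assumes "0 < d" and simple: "\<And>z. poly (monic_poly d a) z = 0 \<Longrightarrow> poly (pderiv (monic_poly d a)) z \<noteq> 0"
  shows "\<forall>\<^sub>F \<epsilon> in at_right 0. \<exists>\<delta>>0. \<forall>b. (\<forall>j<d. \<bar>b j - a j\<bar> < \<delta>) \<longrightarrow>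
           roots_close (monic_poly d a) (monic_poly d b) \<epsilon>"
proof -
  define M where "M = 2 + (\<Sum>j<d. \<bar>a j\<bar>)"
  have bounded: "\<bar>z\<bar> < M" if "poly (monic_poly d a) z = 0" for z
    using monic_poly_root_bound[OF that] by (simp add: M_def)
  have "\<forall>\<^sub>F \<epsilon> in at_right 0. \<exists>\<eta>>0. \<forall>q.
          (\<forall>x. \<bar>x\<bar> \<le> M \<longrightarrow> \<bar>poly q x - poly (monic_poly d a) x\<bar> < \<eta> \<and>
                         \<bar>poly (pderiv q) x - poly (pderiv (monic_poly d a)) x\<bar> < \<eta>) \<longrightarrow>
          (\<forall>y. poly q y = 0 \<longrightarrow> \<bar>y\<bar> \<le> M) \<longrightarrow> roots_close (monic_poly d a) q \<epsilon>"
    using monic_poly_nonzero simple bounded by (rule eventually_roots_close)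
  then show ?thesis
  proof (rule eventually_mono, elim exE conjE)
    fix \<epsilon> \<eta> assume "0 < \<eta>" and \<eta>: "\<forall>q. (\<forall>x. \<bar>x\<bar> \<le> M \<longrightarrow> \<bar>poly q x - poly (monic_poly d a) x\<bar> < \<eta> \<and>
        \<bar>poly (pderiv q) x - poly (pderiv (monic_poly d a)) x\<bar> < \<eta>) \<longrightarrow>
        (\<forall>y. poly q y = 0 \<longrightarrow> \<bar>y\<bar> \<le> M) \<longrightarrow> roots_close (monic_poly d a) q \<epsilon>"
    obtain \<delta> where "0 < \<delta>" and close:
      "\<And>b x. \<forall>j<d. \<bar>b j - a j\<bar> < \<delta> \<Longrightarrow> \<bar>x\<bar> \<le> M \<Longrightarrow>
         \<bar>poly (monic_poly d b) x - poly (monic_poly d a) x\<bar> < \<eta> \<and>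
         \<bar>poly (pderiv (monic_poly d b)) x - poly (pderiv (monic_poly d a)) x\<bar> < \<eta>"
      and bounded: "\<And>b y. \<forall>j<d. \<bar>b j - a j\<bar> < \<delta> \<Longrightarrow> poly (monic_poly d b) y = 0 \<Longrightarrow> \<bar>y\<bar> \<le> M"
      using monic_poly_C1_close[OF \<open>0 < d\<close> \<open>0 < \<eta>\<close>, of a] unfolding M_def by blast
    show "\<exists>\<delta>>0. \<forall>b. (\<forall>j<d. \<bar>b j - a j\<bar> < \<delta>) \<longrightarrow> roots_close (monic_poly d a) (monic_poly d b) \<epsilon>"
      using \<open>0 < \<delta>\<close> \<eta> close bounded by blast
  qed
qed

definition even_part :: "real poly \<Rightarrow> real \<Rightarrow> real" where
  "even_part p x = (\<Sum>j\<le>degree p. if even j then coeff p j * x ^ j else 0)"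

definition odd_part :: "real poly \<Rightarrow> real \<Rightarrow> real" where
  "odd_part p x = (\<Sum>j\<le>degree p. if odd j then coeff p j * x ^ j else 0)"

lemma poly_eq_even_part_plus_odd_part: "poly p x = even_part p x + odd_part p x"
  unfolding poly_altdef even_part_def odd_part_def by (auto simp: sum.distrib[symmetric] intro!: sum.cong)

lemma poly_minus_eq_even_part_minus_odd_part: "poly p (- x) = even_part p x - odd_part p x"
  unfolding poly_altdef even_part_def odd_part_def by (auto simp: sum_subtractf[symmetric] intro!: sum.cong)

section \<open>No opposite roots in \<open>A_set d\<close>\<close>

lemma even_part_div_power_strict_antimono:
  fixes p :: "real poly"
  assumes "odd (degree p)" "3 \<le> degree p" "0 < coeff p 0"
    and nonneg: "\<And>j. even j \<Longrightarrow> j < degree p - 1 \<Longrightarrow> 0 \<le> coeff p j"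
    and "0 < x" "x < y"
  shows "even_part p y * x ^ (degree p - 1) < even_part p x * y ^ (degree p - 1)"
proof -
  define n where "n = degree p - 1"
  have "even_part p x * y ^ n - even_part p y * x ^ n
        = (\<Sum>j\<le>degree p. if even j then coeff p j * (x ^ j * y ^ n - y ^ j * x ^ n) else 0)"
    unfolding even_part_def sum_distrib_right sum_subtractf[symmetric]
    by (rule sum.cong) (auto simp: algebra_simps)
  also have "\<dots> > 0"
  proof (rule sum_pos2[of _ 0])
    have "x ^ n < y ^ n" using assms by (intro power_strict_mono) (auto simp: n_def)
    then show "0 < (if even 0 then coeff p 0 * (x ^ 0 * y ^ n - y ^ 0 * x ^ n) else 0)"
      using assms by simp
  next
    fix j assume "j \<in> {..degree p}"
    show "0 \<le> (if even j then coeff p j * (x ^ j * y ^ n - y ^ j * x ^ n) else 0)"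
    proof (cases "even j \<and> j < n")
      case True
      then have "x ^ j * y ^ n - y ^ j * x ^ n = x ^ j * y ^ j * (y ^ (n - j) - x ^ (n - j))"
        by (simp add: algebra_simps flip: power_add)
      also have "\<dots> \<ge> 0"
        using assms power_mono[of x y "n - j"] by (intro mult_nonneg_nonneg) auto
      finally show ?thesis using True nonneg[of j] by (simp add: n_def)
    next
      case False
      with \<open>j \<in> {..degree p}\<close> assms(1) have "odd j \<or> j = n" unfolding n_def by auto presburger
      then show ?thesis by auto
    qed
  qed auto
  finally show ?thesis by (simp add: n_def)
qed

lemma odd_part_div_strict_mono:
  fixes p :: "real poly"
  assumes nonneg: "\<And>j. odd j \<Longrightarrow> 1 < j \<Longrightarrow> 0 \<le> coeff p j"
    and "odd k" "1 < k" "0 < coeff p k" and "0 < x" "x < y"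
  shows "odd_part p x * y < odd_part p y * x"
proof -
  have "k \<le> degree p" using \<open>0 < coeff p k\<close> by (auto intro: le_degree)
  have "odd_part p y * x - odd_part p x * y
        = (\<Sum>j\<le>degree p. if odd j then coeff p j * (x * y * (y ^ (j - 1) - x ^ (j - 1))) else 0)"
    unfolding odd_part_def sum_distrib_right sum_subtractf[symmetric]
    by (rule sum.cong) (auto simp: algebra_simps elim!: oddE)
  also have "\<dots> > 0"
  proof (rule sum_pos2[of _ k])
    have "x ^ (k - 1) < y ^ (k - 1)" using assms by (intro power_strict_mono) auto
    then show "0 < (if odd k then coeff p k * (x * y * (y ^ (k - 1) - x ^ (k - 1))) else 0)"
      using assms by simp
  next
    fix j assume "j \<in> {..degree p}"
    have "0 \<le> y ^ (j - 1) - x ^ (j - 1)" using assms by (simp add: power_mono)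
    moreover have "0 \<le> coeff p j \<or> j = 1 \<or> even j" using nonneg[of j] by (cases j) auto
    ultimately show "0 \<le> (if odd j then coeff p j * (x * y * (y ^ (j - 1) - x ^ (j - 1))) else 0)"
      using assms by auto
  qed (use \<open>k \<le> degree p\<close> in auto)
  finally show ?thesis by simp
qed

lemma coeff_monic_poly_pos_if_sigma_bullet:
  assumes "sigma_bullet d a" "j \<le> d" "j \<noteq> 1" "j \<noteq> d - 1" "0 < d"
  shows "0 < coeff (monic_poly d a) j"
  using assms by (auto simp: sigma_bullet_def coeff_monic_poly)

lemma even_part_pos_if_sigma_bullet:
  assumes "sigma_bullet d a" "even d" "0 < d" "0 < r"
  shows "0 < even_part (monic_poly d a) r"
  unfolding even_part_def
proof (rule sum_pos2[of _ d])
  fix j assume "j \<in> {..degree (monic_poly d a)}"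
  moreover have "even j \<Longrightarrow> j \<noteq> 1 \<and> j \<noteq> d - 1" using assms(2,3) by presburger
  ultimately show "0 \<le> (if even j then coeff (monic_poly d a) j * r ^ j else 0)"
    using coeff_monic_poly_pos_if_sigma_bullet[OF assms(1), of j] assms by (auto simp: less_imp_le)
qed (use assms in \<open>simp_all add: coeff_monic_poly\<close>)

lemma sigma_bullet_parts_monotone:
  assumes "sigma_bullet d a" "odd d" "3 \<le> d" "0 < u" "u < v"
  shows "even_part (monic_poly d a) v * u ^ (d - 1) < even_part (monic_poly d a) u * v ^ (d - 1)"
    and "odd_part (monic_poly d a) u * v < odd_part (monic_poly d a) v * u"
proof -
  let ?p = "monic_poly d a"
  note pos = coeff_monic_poly_pos_if_sigma_bullet[OF assms(1)]
  have "0 \<le> coeff ?p j" if "even j" "j < d - 1" for j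
    using pos[of j] that assms(3) by (auto simp: less_imp_le)
  then show "even_part ?p v * u ^ (d - 1) < even_part ?p u * v ^ (d - 1)"
    using even_part_div_power_strict_antimono[of ?p u v] assms(2-5) pos[of 0] by simp
  have "0 \<le> coeff ?p j" if "odd j" "1 < j" for j
  proof (cases "j \<le> d")
    case True
    from \<open>odd j\<close> \<open>odd d\<close> have "j \<noteq> d - 1" by presburger
    with pos[of j] that True assms(3) show ?thesis by (simp add: less_imp_le)
  qed (simp add: coeff_monic_poly)
  then show "odd_part ?p u * v < odd_part ?p v * u"
    using odd_part_div_strict_mono[of ?p d u v] assms(2-5) pos[of d] by simp
qed

lemma sigma_bullet_opposite_roots:
  assumes "sigma_bullet d a" "3 \<le> d" "0 < r"
    and "poly (monic_poly d a) r = 0" "poly (monic_poly d a) (- r) = 0"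
  shows "{x. x < 0 \<and> poly (monic_poly d a) x = 0} = {- r}"
proof -
  let ?p = "monic_poly d a"
  have E: "even_part ?p r = 0" and O: "odd_part ?p r = 0"
    using assms(4,5) poly_eq_even_part_plus_odd_part[of ?p r] poly_minus_eq_even_part_minus_odd_part[of ?p r]
    by auto
  have "odd d" using even_part_pos_if_sigma_bullet[OF assms(1) _ _ \<open>0 < r\<close>] E assms(2) by force
  note mono = sigma_bullet_parts_monotone[OF assms(1) \<open>odd d\<close> assms(2)]
  have "t = r" if "0 < t" "poly ?p (- t) = 0" for t
  proof -
    have "even_part ?p t = odd_part ?p t"
      using that(2) poly_minus_eq_even_part_minus_odd_part[of ?p t] by simp
    moreover consider "t < r" | "t = r" | "r < t" by linarith
    then have "t \<noteq> r \<Longrightarrow> even_part ?p t \<noteq> odd_part ?p t"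
    proof cases
      case 1
      with mono[of t r] E O \<open>0 < t\<close> \<open>0 < r\<close>
      have "0 < even_part ?p t" "odd_part ?p t < 0" by (simp_all add: zero_less_mult_iff mult_less_0_iff)
      then show ?thesis by simp
    next
      case 3
      with mono[of r t] E O \<open>0 < r\<close>
      have "even_part ?p t < 0" "0 < odd_part ?p t" by (simp_all add: zero_less_mult_iff mult_less_0_iff)
      then show ?thesis by simp
    qed simp
    ultimately show "t = r" by blast
  qed
  then have "x = - r" if "x < 0" "poly ?p x = 0" for x
    using that by (metis neg_0_less_iff_less minus_minus)
  with assms(5) \<open>0 < r\<close> show ?thesis by auto
qed

lemma A_set_no_opposite_roots:
  assumes "a \<in> A_set d" "6 \<le> d" "poly (monic_poly d a) z = 0" "poly (monic_poly d a) z' = 0"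
  shows "z + z' \<noteq> 0"
proof
  assume "z + z' = 0"
  have "z \<noteq> 0" using R3_roots_simple_nonzero(2)[of a d z] assms by (simp add: A_set_def)
  define r where "r = \<bar>z\<bar>"
  have "0 < r" "poly (monic_poly d a) r = 0" "poly (monic_poly d a) (- r) = 0"
    using \<open>z \<noteq> 0\<close> \<open>z + z' = 0\<close> assms(3,4) by (auto simp: r_def abs_if add_eq_0_iff)
  then have "neg_roots (monic_poly d a) = 1"
    using sigma_bullet_opposite_roots[of d a r] assms(1,2) by (simp add: A_set_def neg_roots_def)
  moreover have "neg_roots (monic_poly d a) = d - 4" using assms(1) by (simp add: A_set_def)
  ultimately show False using assms(2) by linarith
qed

section \<open>\<open>A_set d\<close> is a union of components of \<open>R3 d\<close>\<close>

lemma eventually_sigma_bullet_eq: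
  assumes "\<forall>j<d. a j \<noteq> 0"
  shows "\<forall>\<^sub>F \<delta> in at_right 0. \<forall>b. (\<forall>j<d. \<bar>b j - a j\<bar> < \<delta>) \<longrightarrow> sigma_bullet d b = sigma_bullet d a"
proof -
  have "\<forall>\<^sub>F \<delta> in at_right 0. \<forall>j\<in>{..<d}. \<delta> < \<bar>a j\<bar>"
    using assms by (intro eventually_ball_finite ballI eventually_less_at_right_0) auto
  then show ?thesis
  proof (rule eventually_mono, intro allI impI)
    fix \<delta> b assume \<delta>: "\<forall>j\<in>{..<d}. \<delta> < \<bar>a j\<bar>" and b: "\<forall>j<d. \<bar>b j - a j\<bar> < \<delta>"
    have "(b j < 0 \<longleftrightarrow> a j < 0) \<and> (0 < b j \<longleftrightarrow> 0 < a j)" if "j < d" for j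
    proof -
      from \<delta> b that have "sgn (b j) = sgn (a j)" by (intro sgn_eq_if_close) force
      then show ?thesis using sgn_greater[of "b j"] sgn_greater[of "a j"] sgn_less[of "b j"] sgn_less[of "a j"]
        by metis
    qed
    then show "sigma_bullet d b = sigma_bullet d a" unfolding sigma_bullet_def by auto
  qed
qed

lemma root_data_near_R3:
  assumes "a \<in> R3 d" "0 < d"
  obtains \<delta> where "0 < \<delta>"
    "\<And>b. \<forall>j<d. \<bar>b j - a j\<bar> < \<delta> \<Longrightarrow>
       pos_roots (monic_poly d b) = pos_roots (monic_poly d a) \<and>
       neg_roots (monic_poly d b) = neg_roots (monic_poly d a)"
    "\<And>b. \<forall>j<d. \<bar>b j - a j\<bar> < \<delta> \<Longrightarrow>
       (\<And>z z'. poly (monic_poly d a) z = 0 \<Longrightarrow> poly (monic_poly d a) z' = 0 \<Longrightarrow> z + z' \<noteq> 0) \<Longrightarrow>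
       small_pos_root (monic_poly d b) \<longleftrightarrow> small_pos_root (monic_poly d a)"
proof -
  let ?p = "monic_poly d a"
  note simple = R3_roots_simple_nonzero(1)[OF assms] and nonzero = R3_roots_simple_nonzero(2)[OF assms]
  obtain \<epsilon> where "0 < \<epsilon>"
    and gaps: "\<And>z z'. poly ?p z = 0 \<Longrightarrow> poly ?p z' = 0 \<Longrightarrow>
                 (z \<noteq> z' \<longrightarrow> 2 * \<epsilon> < \<bar>z - z'\<bar>) \<and> (z + z' \<noteq> 0 \<longrightarrow> 2 * \<epsilon> < \<bar>z + z'\<bar>)"
    and "\<exists>\<delta>>0. \<forall>b. (\<forall>j<d. \<bar>b j - a j\<bar> < \<delta>) \<longrightarrow> roots_close ?p (monic_poly d b) \<epsilon>"
    using eventually_happens'[OF trivial_limit_at_right_real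
        eventually_conj[OF eventually_at_right_less
          eventually_conj[OF eventually_root_gaps[OF monic_poly_nonzero]
            eventually_roots_close_monic_poly[OF \<open>0 < d\<close> simple]]]]
    by blast
  then obtain \<delta> where "0 < \<delta>"
    and close: "\<And>b. \<forall>j<d. \<bar>b j - a j\<bar> < \<delta> \<Longrightarrow> roots_close ?p (monic_poly d b) \<epsilon>"
    by blast
  have sep: "2 * \<epsilon> < \<bar>z - z'\<bar>" if "poly ?p z = 0" "poly ?p z' = 0" "z \<noteq> z'" for z z'
    using gaps[OF that(1,2)] that(3) by blast
  have away: "\<epsilon> < \<bar>z\<bar>" if "poly ?p z = 0" for z
    using gaps[OF that that] nonzero[OF that] by simp
  show ?thesis
  proof (rule that[OF \<open>0 < \<delta>\<close>])
    fix b assume "\<forall>j<d. \<bar>b j - a j\<bar> < \<delta>"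
    then obtain g where bij: "bij_betw g {y. poly (monic_poly d b) y = 0} {z. poly ?p z = 0}"
      and near: "\<And>y. poly (monic_poly d b) y = 0 \<Longrightarrow> \<bar>y - g y\<bar> < \<epsilon>"
      using roots_close_bij[OF close sep] by blast
    show "pos_roots (monic_poly d b) = pos_roots ?p \<and> neg_roots (monic_poly d b) = neg_roots ?p"
      using root_counts_eq_if_bij_betw[OF bij near away] by blast
    assume "\<And>z z'. poly ?p z = 0 \<Longrightarrow> poly ?p z' = 0 \<Longrightarrow> z + z' \<noteq> 0"
    with gaps have "2 * \<epsilon> < \<bar>z + z'\<bar>" if "poly ?p z = 0" "poly ?p z' = 0" for z z'
      using that by blast
    then show "small_pos_root (monic_poly d b) \<longleftrightarrow> small_pos_root ?p"
      using small_pos_root_eq_if_bij_betw[OF bij near] by blast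
  qed
qed

lemma locally_constant_near_R3:
  assumes "a \<in> R3 d" "6 \<le> d"
  shows "\<exists>\<delta>>0. \<forall>b\<in>R3 d. (\<forall>j<d. \<bar>b j - a j\<bar> < \<delta>) \<longrightarrow>
           (b \<in> A_set d \<longleftrightarrow> a \<in> A_set d) \<and>
           (a \<in> A_set d \<longrightarrow> (small_pos_root (monic_poly d b) \<longleftrightarrow> small_pos_root (monic_poly d a)))"
proof -
  have "0 < d" using assms(2) by simp
  obtain \<delta>1 where "0 < \<delta>1"
    and counts: "\<And>b. \<forall>j<d. \<bar>b j - a j\<bar> < \<delta>1 \<Longrightarrow>
       pos_roots (monic_poly d b) = pos_roots (monic_poly d a) \<and>
       neg_roots (monic_poly d b) = neg_roots (monic_poly d a)"
    and small: "\<And>b. \<forall>j<d. \<bar>b j - a j\<bar> < \<delta>1 \<Longrightarrow>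
       (\<And>z z'. poly (monic_poly d a) z = 0 \<Longrightarrow> poly (monic_poly d a) z' = 0 \<Longrightarrow> z + z' \<noteq> 0) \<Longrightarrow>
       small_pos_root (monic_poly d b) \<longleftrightarrow> small_pos_root (monic_poly d a)"
    using root_data_near_R3[OF assms(1) \<open>0 < d\<close>] by blast
  have "\<forall>j<d. a j \<noteq> 0" using assms(1) by (simp add: R3_def)
  from eventually_happens'[OF trivial_limit_at_right_real
      eventually_conj[OF eventually_at_right_less eventually_sigma_bullet_eq[OF this]]]
  obtain \<delta>2 where "0 < \<delta>2"
    and sigma: "\<And>b. \<forall>j<d. \<bar>b j - a j\<bar> < \<delta>2 \<Longrightarrow> sigma_bullet d b = sigma_bullet d a"
    by blast
  have "(b \<in> A_set d \<longleftrightarrow> a \<in> A_set d) \<and>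
        (a \<in> A_set d \<longrightarrow> (small_pos_root (monic_poly d b) \<longleftrightarrow> small_pos_root (monic_poly d a)))"
    if "b \<in> R3 d" "\<forall>j<d. \<bar>b j - a j\<bar> < min \<delta>1 \<delta>2" for b
    using counts[of b] sigma[of b] small[of b] A_set_no_opposite_roots[OF _ assms(2)] that assms(1)
    by (auto simp: A_set_def)
  then show ?thesis using \<open>0 < \<delta>1\<close> \<open>0 < \<delta>2\<close> by (intro exI[of _ "min \<delta>1 \<delta>2"]) auto
qed

lemma open_coeff_ball: "open {b :: nat \<Rightarrow> real. \<forall>j<d. \<bar>b j - a j\<bar> < \<delta>}"
proof -
  have "{b :: nat \<Rightarrow> real. \<forall>j<d. \<bar>b j - a j\<bar> < \<delta>} = (\<Inter>j<d. {b. \<bar>b j - a j\<bar> < \<delta>})" by auto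
  moreover have "open {b :: nat \<Rightarrow> real. \<bar>b j - a j\<bar> < \<delta>}" for j
    by (intro open_Collect_less continuous_intros continuous_on_product_coordinates)
  ultimately show ?thesis by (auto intro: open_INT)
qed

definition locally_constant_on :: "'a::topological_space set \<Rightarrow> 'a set \<Rightarrow> bool" where
  "locally_constant_on T S \<longleftrightarrow> (\<forall>x\<in>T. \<exists>U. open U \<and> x \<in> U \<and> (\<forall>y\<in>U \<inter> T. y \<in> S \<longleftrightarrow> x \<in> S))"

lemma connected_subset_or_disjoint:
  assumes "connected C" "C \<subseteq> T" "locally_constant_on T S"
  shows "C \<subseteq> S \<or> C \<inter> S = {}"
proof -
  have "(\<lambda>y. y \<in> S) constant_on C"
  proof (rule locally_constant_imp_constant[OF \<open>connected C\<close>])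
    fix x assume "x \<in> C"
    then obtain U where "open U" "x \<in> U" "\<forall>y\<in>U \<inter> T. y \<in> S \<longleftrightarrow> x \<in> S"
      using assms(2,3) unfolding locally_constant_on_def by blast
    then show "\<exists>V. openin (top_of_set C) V \<and> x \<in> V \<and> (\<forall>y\<in>V. (y \<in> S) = (x \<in> S))"
      using \<open>x \<in> C\<close> assms(2) by (intro exI[of _ "C \<inter> U"]) (auto simp: openin_open)
  qed
  then show ?thesis unfolding constant_on_def by blast
qed

lemma connected_component_subset_if_locally_constant:
  assumes "locally_constant_on T A" "x \<in> A" "A \<subseteq> T"
  shows "connected_component_set T x \<subseteq> A"
proof -
  have "x \<in> connected_component_set T x" using assms(2,3) by auto
  moreover have "connected_component_set T x \<subseteq> A \<or> connected_component_set T x \<inter> A = {}"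
    by (rule connected_subset_or_disjoint[OF connected_connected_component connected_component_subset assms(1)])
  ultimately show ?thesis using assms(2) by blast
qed

lemma split_into_components:
  assumes "A \<subseteq> T" "locally_constant_on T A" "locally_constant_on A H"
    and "s \<in> A" "s \<in> H" "t \<in> A" "t \<notin> H"
  shows "\<not> connected A \<and> (\<exists>\<C>. \<C> \<subseteq> components T \<and> A = \<Union>\<C> \<and> (\<exists>C1\<in>\<C>. \<exists>C2\<in>\<C>. C1 \<noteq> C2))"
proof
  show "\<not> connected A"
  proof
    assume "connected A"
    from connected_subset_or_disjoint[OF this order_refl \<open>locally_constant_on A H\<close>] assms(4-7)
    show False by blast
  qed
next
  let ?comp = "connected_component_set T"
  note comp = connected_component_subset_if_locally_constant[OF assms(2) _ assms(1)]
  have comp_mem: "?comp x \<in> components T" "x \<in> ?comp x" if "x \<in> A" for x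
    using that assms(1) by (auto intro: componentsI)
  define \<C> where "\<C> = {C \<in> components T. C \<subseteq> A}"
  have "\<C> \<subseteq> components T" by (simp add: \<C>_def)
  moreover have "A = \<Union>\<C>"
  proof (intro equalityI subsetI)
    fix x assume "x \<in> A"
    with comp[OF this] comp_mem[OF this] show "x \<in> \<Union>\<C>" unfolding \<C>_def by blast
  qed (auto simp: \<C>_def)
  moreover have "?comp s \<in> \<C>" "?comp t \<in> \<C>"
    using comp comp_mem assms(4,6) by (simp_all add: \<C>_def)
  moreover have "?comp s \<noteq> ?comp t"
  proof
    assume "?comp s = ?comp t"
    moreover have "?comp s \<subseteq> H \<or> ?comp s \<inter> H = {}"
      by (rule connected_subset_or_disjoint[OF connected_connected_component comp[OF \<open>s \<in> A\<close>] assms(3)])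
    ultimately show False
      using comp_mem(2)[OF \<open>s \<in> A\<close>] comp_mem(2)[OF \<open>t \<in> A\<close>] \<open>s \<in> H\<close> \<open>t \<notin> H\<close> by blast
  qed
  ultimately show "\<exists>\<C>. \<C> \<subseteq> components T \<and> A = \<Union>\<C> \<and> (\<exists>C1\<in>\<C>. \<exists>C2\<in>\<C>. C1 \<noteq> C2)"
    by (intro exI[of _ \<C>] conjI bexI)
qed

lemma locally_constant_on_R3_A_set:
  assumes "6 \<le> d"
  shows "locally_constant_on (R3 d) (A_set d)"
    and "locally_constant_on (A_set d) {a. small_pos_root (monic_poly d a)}"
proof -
  have nbhd: "\<exists>U. open U \<and> a \<in> U \<and> (\<forall>b\<in>U \<inter> R3 d. b \<in> A_set d \<longleftrightarrow> a \<in> A_set d) \<and>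
          (a \<in> A_set d \<longrightarrow> (\<forall>b\<in>U \<inter> R3 d. small_pos_root (monic_poly d b) \<longleftrightarrow> small_pos_root (monic_poly d a)))"
    if a_R3: "a \<in> R3 d" for a
  proof -
    obtain \<delta> where "0 < \<delta>" and \<delta>: "\<forall>b\<in>R3 d. (\<forall>j<d. \<bar>b j - a j\<bar> < \<delta>) \<longrightarrow>
        (b \<in> A_set d \<longleftrightarrow> a \<in> A_set d) \<and>
        (a \<in> A_set d \<longrightarrow> (small_pos_root (monic_poly d b) \<longleftrightarrow> small_pos_root (monic_poly d a)))"
      using locally_constant_near_R3[OF a_R3 assms] by (elim exE conjE)
    show ?thesis
    proof (intro exI conjI)
      show "open {b. \<forall>j<d. \<bar>b j - a j\<bar> < \<delta>}" by (rule open_coeff_ball)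
    qed (use \<open>0 < \<delta>\<close> \<delta> in auto)
  qed
  have "A_set d \<subseteq> R3 d" by (auto simp: A_set_def)
  show "locally_constant_on (R3 d) (A_set d)" unfolding locally_constant_on_def
  proof
    fix a assume "a \<in> R3 d"
    from nbhd[OF this] obtain U where "open U" "a \<in> U" "\<forall>b\<in>U \<inter> R3 d. b \<in> A_set d \<longleftrightarrow> a \<in> A_set d"
      by (elim exE conjE)
    then show "\<exists>U. open U \<and> a \<in> U \<and> (\<forall>b\<in>U \<inter> R3 d. b \<in> A_set d \<longleftrightarrow> a \<in> A_set d)" by (intro exI conjI)
  qed
  show "locally_constant_on (A_set d) {a. small_pos_root (monic_poly d a)}" unfolding locally_constant_on_def
  proof
    fix a assume "a \<in> A_set d"
    with \<open>A_set d \<subseteq> R3 d\<close> have "a \<in> R3 d" by blast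
    from nbhd[OF this] obtain U where "open U" "a \<in> U"
      and U: "a \<in> A_set d \<longrightarrow> (\<forall>b\<in>U \<inter> R3 d. small_pos_root (monic_poly d b) \<longleftrightarrow> small_pos_root (monic_poly d a))"
      by (elim exE conjE)
    show "\<exists>U. open U \<and> a \<in> U \<and> (\<forall>b\<in>U \<inter> A_set d.
        b \<in> {a. small_pos_root (monic_poly d a)} \<longleftrightarrow> a \<in> {a. small_pos_root (monic_poly d a)})"
    proof (intro exI conjI)
      show "\<forall>b\<in>U \<inter> A_set d. b \<in> {a. small_pos_root (monic_poly d a)} \<longleftrightarrow> a \<in> {a. small_pos_root (monic_poly d a)}"
        using U \<open>a \<in> A_set d\<close> \<open>A_set d \<subseteq> R3 d\<close> by blast
    qed fact+
  qed
qed

section \<open>Polynomials with the sign pattern \<open>\<sigma>\<^sub>\<bullet>\<close>\<close>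

text \<open>\<open>t\<^sup>2 q(x/t)\<close> for \<open>q = x\<^sup>2 - kx + 2\<close>: for \<open>k = 3\<close> this is \<open>(x - t)(x - 2t)\<close>, for \<open>k = 2\<close> it has the
  roots \<open>t \<plusminus> it\<close>.\<close>
definition rescaled_quadratic :: "real \<Rightarrow> real \<Rightarrow> real poly" where
  "rescaled_quadratic k t = [:2 * t\<^sup>2, - k * t, 1:]"

lemma coeff_rescaled_quadratic_mult:
  "coeff (rescaled_quadratic k t * p) j =
     2 * coeff p j * t\<^sup>2 + (if j = 0 then 0 else - k * coeff p (j - 1)) * t + (if j < 2 then 0 else coeff p (j - 2))"
proof (cases j)
  case (Suc i)
  then show ?thesis
    by (cases i) (simp_all add: rescaled_quadratic_def mult_pCons_left algebra_simps)
qed (simp add: rescaled_quadratic_def mult_pCons_left algebra_simps)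

lemma degree_rescaled_quadratic_mult:
  "p \<noteq> 0 \<Longrightarrow> degree (rescaled_quadratic k t * p) = degree p + 2"
  by (subst degree_mult_eq) (auto simp: rescaled_quadratic_def)

lemma lead_coeff_rescaled_quadratic_mult: "lead_coeff (rescaled_quadratic k t * p) = lead_coeff p"
  by (simp only: lead_coeff_mult) (simp add: rescaled_quadratic_def)

lemma eventually_sgn_eq_of_tendsto:
  fixes f :: "'a \<Rightarrow> real"
  assumes "(f \<longlongrightarrow> l) F" "l \<noteq> 0"
  shows "\<forall>\<^sub>F x in F. sgn (f x) = sgn l"
proof (cases "0 < l")
  case True
  then show ?thesis using order_tendstoD(1)[OF assms(1) True] by (auto elim: eventually_mono)
next
  case False
  with assms(2) have "l < 0" by simp
  then show ?thesis using order_tendstoD(2)[OF assms(1) \<open>l < 0\<close>] by (auto elim: eventually_mono)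
qed

lemma eventually_sgn_quadratic_at_top:
  fixes a b c :: real
  assumes "a \<noteq> 0"
  shows "\<forall>\<^sub>F t in at_top. sgn (a * t\<^sup>2 + b * t + c) = sgn a"
proof -
  have "((\<lambda>t. (a * t\<^sup>2 + b * t + c) / t\<^sup>2) \<longlongrightarrow> a) at_top" by real_asymp
  from eventually_sgn_eq_of_tendsto[OF this assms] eventually_gt_at_top[of 0]
  show ?thesis by eventually_elim (simp add: sgn_divide)
qed

lemma eventually_sgn_linear_at_top:
  fixes a b :: real
  assumes "a \<noteq> 0"
  shows "\<forall>\<^sub>F t in at_top. sgn (a * t + b) = sgn a"
proof -
  have "((\<lambda>t. (a * t + b) / t) \<longlongrightarrow> a) at_top" by real_asymp
  from eventually_sgn_eq_of_tendsto[OF this assms] eventually_gt_at_top[of 0]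
  show ?thesis by eventually_elim (simp add: sgn_divide)
qed

lemma eventually_sgn_at_right_0:
  fixes a b c :: real
  assumes "c \<noteq> 0"
  shows "\<forall>\<^sub>F t in at_right 0. sgn (a * t\<^sup>2 + b * t + c) = sgn c"
proof -
  have "((\<lambda>t. a * t\<^sup>2 + b * t + c) \<longlongrightarrow> c) (at_right 0)" by real_asymp
  from eventually_sgn_eq_of_tendsto[OF this assms] show ?thesis .
qed

definition coeff_signs :: "real poly \<Rightarrow> real list" where
  "coeff_signs p = map (\<lambda>j. sgn (coeff p j)) [0..<Suc (degree p)]"

lemma length_coeff_signs [simp]: "length (coeff_signs p) = Suc (degree p)"
  by (simp add: coeff_signs_def)

lemma nth_coeff_signs: "j \<le> degree p \<Longrightarrow> coeff_signs p ! j = sgn (coeff p j)"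
  by (simp add: coeff_signs_def nth_map_upt del: upt_Suc)

lemma hd_coeff_signs: "hd (coeff_signs p) = sgn (coeff p 0)"
  by (simp add: coeff_signs_def hd_map del: upt_Suc)

lemma last_coeff_signs: "last (coeff_signs p) = sgn (lead_coeff p)"
  by (simp add: coeff_signs_def last_map del: upt_Suc)

lemma coeff_signs_eqI:
  assumes "length xs = Suc (degree p)" "\<And>j. j \<le> degree p \<Longrightarrow> sgn (coeff p j) = xs ! j"
  shows "coeff_signs p = xs"
  by (rule nth_equalityI) (use assms in \<open>auto simp: nth_coeff_signs\<close>)

lemma coeff_nonzero_if_coeff_signs:
  assumes "0 \<notin> set (coeff_signs p)" "j \<le> degree p"
  shows "coeff p j \<noteq> 0"
  using assms nth_mem[of j "coeff_signs p"] by (auto simp: nth_coeff_signs)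

lemma eventually_coeff_signs_rescaled_quadratic_at_top:
  assumes "0 < k" and nz: "0 \<notin> set (coeff_signs p)"
  shows "\<forall>\<^sub>F t in at_top. coeff_signs (rescaled_quadratic k t * p) =
           coeff_signs p @ [- last (coeff_signs p), last (coeff_signs p)]"
proof -
  have c: "coeff p j \<noteq> 0" if "j \<le> degree p" for j using coeff_nonzero_if_coeff_signs[OF nz] that by simp
  have "p \<noteq> 0" using c[of 0] by auto
  let ?xs = "coeff_signs p @ [- last (coeff_signs p), last (coeff_signs p)]"
  have "\<forall>\<^sub>F t in at_top. sgn (coeff (rescaled_quadratic k t * p) j) = ?xs ! j" if j: "j \<le> degree p + 2" for j
  proof -
    consider "j \<le> degree p" | "j = degree p + 1" | "j = degree p + 2" using j by linarith
    then show ?thesis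
    proof cases
      case 1
      then have "2 * coeff p j \<noteq> 0" using c by simp
      from eventually_sgn_quadratic_at_top[OF this,
          of "if j = 0 then 0 else - k * coeff p (j - 1)" "if j < 2 then 0 else coeff p (j - 2)"] 1
      show ?thesis unfolding coeff_rescaled_quadratic_mult
        by (simp add: nth_append nth_coeff_signs sgn_mult mult_ac)
    next
      case 2
      have eq: "coeff (rescaled_quadratic k t * p) j =
                  (- k * lead_coeff p) * t + (if degree p = 0 then 0 else coeff p (degree p - 1))" for t
        using 2 by (simp add: coeff_rescaled_quadratic_mult coeff_eq_0)
      have "- k * lead_coeff p \<noteq> 0" using \<open>0 < k\<close> \<open>p \<noteq> 0\<close> by simp
      from eventually_sgn_linear_at_top[OF this, of "if degree p = 0 then 0 else coeff p (degree p - 1)"]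
      show ?thesis unfolding eq
        by (rule eventually_mono) (use \<open>0 < k\<close> 2 in \<open>simp add: nth_append last_coeff_signs sgn_mult\<close>)
    next
      case 3
      have "coeff p (degree p + 2) = 0" "coeff p (degree p + 1) = 0" by (simp_all add: coeff_eq_0)
      with 3 show ?thesis
        by (simp add: coeff_rescaled_quadratic_mult nth_append last_coeff_signs)
    qed
  qed
  then have "\<forall>\<^sub>F t in at_top. \<forall>j\<in>{..degree p + 2}. sgn (coeff (rescaled_quadratic k t * p) j) = ?xs ! j"
    by (intro eventually_ball_finite) auto
  then show ?thesis
    by eventually_elim
       (rule coeff_signs_eqI, simp_all add: degree_rescaled_quadratic_mult[OF \<open>p \<noteq> 0\<close>])
qed

lemma eventually_coeff_signs_rescaled_quadratic_at_right_0:
  assumes "0 < k" and nz: "0 \<notin> set (coeff_signs p)"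
  shows "\<forall>\<^sub>F t in at_right 0. coeff_signs (rescaled_quadratic k t * p) =
           [hd (coeff_signs p), - hd (coeff_signs p)] @ coeff_signs p"
proof -
  have c: "coeff p j \<noteq> 0" if "j \<le> degree p" for j using coeff_nonzero_if_coeff_signs[OF nz] that by simp
  have "p \<noteq> 0" using c[of 0] by auto
  let ?xs = "[hd (coeff_signs p), - hd (coeff_signs p)] @ coeff_signs p"
  have "\<forall>\<^sub>F t in at_right 0. sgn (coeff (rescaled_quadratic k t * p) j) = ?xs ! j" if j: "j \<le> degree p + 2" for j
  proof -
    consider "j = 0" | "j = 1" | "2 \<le> j" by linarith
    then show ?thesis
    proof cases
      case 1
      show ?thesis using eventually_at_right_less[of 0]
        by eventually_elim (simp add: 1 coeff_rescaled_quadratic_mult hd_coeff_signs sgn_mult)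
    next
      case 2
      have eq: "coeff (rescaled_quadratic k t * p) (Suc 0) = t * (0 * t\<^sup>2 + 2 * coeff p 1 * t + - k * coeff p 0)" for t
        by (simp add: coeff_rescaled_quadratic_mult power2_eq_square) (simp add: algebra_simps)
      have "- k * coeff p 0 \<noteq> 0" using \<open>0 < k\<close> c[of 0] by simp
      from eventually_sgn_at_right_0[OF this, of 0 "2 * coeff p 1"] eventually_at_right_less[of 0]
      show ?thesis
        by eventually_elim (use \<open>0 < k\<close> in \<open>simp add: eq 2 sgn_mult hd_coeff_signs\<close>)
    next
      case 3
      with j have "coeff p (j - 2) \<noteq> 0" by (intro c) linarith
      from eventually_sgn_at_right_0[OF this, of "2 * coeff p j" "- k * coeff p (j - 1)"]
      show ?thesis unfolding coeff_rescaled_quadratic_mult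
        by (rule eventually_mono) (use 3 j in \<open>simp add: nth_append nth_coeff_signs numeral_2_eq_2\<close>)
    qed
  qed
  then have "\<forall>\<^sub>F t in at_right 0. \<forall>j\<in>{..degree p + 2}. sgn (coeff (rescaled_quadratic k t * p) j) = ?xs ! j"
    by (intro eventually_ball_finite) auto
  then show ?thesis
    by eventually_elim
       (rule coeff_signs_eqI, simp_all add: degree_rescaled_quadratic_mult[OF \<open>p \<noteq> 0\<close>])
qed

lemma coeff_linear_mult:
  fixes c :: real
  shows "coeff ([:c, 1:] * p) j = c * coeff p j + (if j = 0 then 0 else coeff p (j - 1))"
  by (cases j) (simp_all add: mult_pCons_left)

lemma prod_linear_factors_coeffs:
  fixes C :: "real set"
  assumes "finite C" "\<And>c. c \<in> C \<Longrightarrow> 0 < c"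
  shows "degree (\<Prod>c\<in>C. [:c, 1:]) = card C \<and> (\<forall>j\<le>card C. 0 < coeff (\<Prod>c\<in>C. [:c, 1:]) j)"
  using assms
proof (induction C rule: finite_induct)
  case (insert c C)
  let ?P = "\<Prod>c\<in>C. [:c, 1:]"
  from insert have IH: "degree ?P = card C" "\<And>j. j \<le> card C \<Longrightarrow> 0 < coeff ?P j" by auto
  have "?P \<noteq> 0" using IH(2)[of 0] by auto
  have "0 < c" using insert.prems by simp
  have "0 < c * coeff ?P j + (if j = 0 then 0 else coeff ?P (j - 1))" if "j \<le> Suc (card C)" for j
  proof (cases "j \<le> card C")
    case True
    with IH(2)[OF True] IH(2)[of "j - 1"] \<open>0 < c\<close> show ?thesis by (auto intro: add_pos_pos)
  next
    case False
    with that have "j = Suc (card C)" by simp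
    with IH show ?thesis by (simp add: coeff_eq_0)
  qed
  moreover have "degree ([:c, 1:] * ?P) = Suc (card C)"
    using \<open>?P \<noteq> 0\<close> IH(1) by (simp add: degree_mult_eq del: mult_pCons_left)
  ultimately show ?case using insert by (simp add: coeff_linear_mult del: mult_pCons_left)
qed simp

lemma coeff_signs_prod_linear_factors:
  fixes C :: "real set"
  assumes "finite C" "\<And>c. c \<in> C \<Longrightarrow> 0 < c"
  shows "coeff_signs (\<Prod>c\<in>C. [:c, 1:]) = replicate (Suc (card C)) 1"
  using prod_linear_factors_coeffs[OF assms] by (intro coeff_signs_eqI) (auto simp del: replicate.simps)

lemma roots_mult_prod_linear_factors:
  fixes F :: "real poly"
  assumes "finite Z" and F: "\<And>x. poly F x \<noteq> 0"
  shows "poly (F * (\<Prod>z\<in>Z. [:- z, 1:])) x = 0 \<longleftrightarrow> x \<in> Z"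
    and "x \<in> Z \<Longrightarrow> order x (F * (\<Prod>z\<in>Z. [:- z, 1:])) = 1"
proof -
  show "poly (F * (\<Prod>z\<in>Z. [:- z, 1:])) x = 0 \<longleftrightarrow> x \<in> Z"
    using F \<open>finite Z\<close> by (simp add: poly_prod)
  have "F \<noteq> 0" using F[of 0] by auto
  have "order x (\<Prod>z\<in>Z. [:- z, 1:]) = (if x \<in> Z then 1 else 0)"
    using \<open>finite Z\<close>
  proof (induction Z rule: finite_induct)
    case (insert z Z)
    have "order x (\<Prod>z\<in>insert z Z. [:- z, 1:]) = order x [:- z, 1:] + order x (\<Prod>z\<in>Z. [:- z, 1:])"
      unfolding prod.insert[OF insert.hyps] using insert.hyps(1) by (intro order_mult) (simp del: mult_pCons_left)
    moreover have "order x [:- z, 1:] = (if x = z then 1 else 0)"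
      using order_power_n_n[of z 1] by (auto intro: order_0I)
    ultimately show ?case using insert by auto
  qed simp
  moreover have "order x F = 0" using F by (intro order_0I)
  moreover have "order x (F * (\<Prod>z\<in>Z. [:- z, 1:])) = order x F + order x (\<Prod>z\<in>Z. [:- z, 1:])"
    using \<open>F \<noteq> 0\<close> \<open>finite Z\<close> by (intro order_mult) simp
  ultimately show "x \<in> Z \<Longrightarrow> order x (F * (\<Prod>z\<in>Z. [:- z, 1:])) = 1" by simp
qed

text \<open>\<open>coeff_signs\<close> starts at the constant term; \<open>\<sigma>\<^sub>\<bullet>\<close> is a palindrome, so this is the pattern as
  written in the paper.\<close>
definition sigma_signs :: "nat \<Rightarrow> real list" where
  "sigma_signs d = [1, -1] @ replicate (d - 3) 1 @ [-1, 1]"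

lemma nth_sigma_signs:
  assumes "3 \<le> d" "j < d"
  shows "sigma_signs d ! j = (if j = d - 1 \<or> j = 1 then -1 else 1)"
proof -
  consider "j = 0" | "j = 1" | "2 \<le> j" "j < d - 1" | "j = d - 1" using assms by linarith
  then show ?thesis
  proof cases
    case 3
    then show ?thesis using assms by (simp add: sigma_signs_def nth_append)
  next
    case 4
    then show ?thesis using assms by (simp add: sigma_signs_def nth_append numeral_3_eq_3)
  qed (use assms in \<open>simp_all add: sigma_signs_def\<close>)
qed

lemma sigma_bullet_if_coeff_signs:
  assumes "coeff_signs p = sigma_signs d" "3 \<le> d"
  shows "sigma_bullet d (coeff p)"
  unfolding sigma_bullet_def
proof (intro allI impI)
  fix j assume "j < d"
  have "degree p = d" using arg_cong[OF assms(1), of length] assms(2) by (simp add: sigma_signs_def)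
  then have "sgn (coeff p j) = (if j = d - 1 \<or> j = 1 then -1 else 1)"
    using assms \<open>j < d\<close> nth_sigma_signs[of d j] nth_coeff_signs[of j p] by simp
  then show "if j = d - 1 \<or> j = 1 then coeff p j < 0 else 0 < coeff p j"
    by (auto simp: sgn_if split: if_splits)
qed

text \<open>Roots \<open>R \<plusminus> iR\<close>, \<open>e\<close>, \<open>2e\<close> and \<open>-1, \<dots>, -m\<close>.\<close>
definition witness_poly :: "real \<Rightarrow> real \<Rightarrow> nat \<Rightarrow> real poly" where
  "witness_poly R e m = rescaled_quadratic 2 R * (rescaled_quadratic 3 e * (\<Prod>c\<in>real ` {1..m}. [:c, 1:]))"

lemma coeff_signs_prod_integer_factors:
  "coeff_signs (\<Prod>c\<in>real ` {1..m}. [:c, 1:]) = replicate (Suc m) 1"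
  by (subst coeff_signs_prod_linear_factors) (auto simp: card_image)

lemma witness_poly_eq_prod:
  assumes "0 < e"
  shows "witness_poly R e m = rescaled_quadratic 2 R * (\<Prod>z\<in>{e, 2 * e} \<union> (\<lambda>i. - real i) ` {1..m}. [:- z, 1:])"
proof -
  have "(\<Prod>c\<in>real ` {1..m}. [:c, 1:]) = (\<Prod>z\<in>(\<lambda>i. - real i) ` {1..m}. [:- z, 1:])"
    by (simp add: prod.reindex inj_on_def)
  moreover have "rescaled_quadratic 3 e = [:- e, 1:] * [:- (2 * e), 1:]"
    by (simp add: rescaled_quadratic_def power2_eq_square algebra_simps)
  moreover have "e \<notin> insert (2 * e) ((\<lambda>i. - real i) ` {1..m})" "2 * e \<notin> (\<lambda>i. - real i) ` {1..m}"
    using assms by auto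
  ultimately show ?thesis by (simp add: witness_poly_def mult.assoc del: mult_pCons_left)
qed

lemma poly_rescaled_quadratic_2_pos: "R \<noteq> 0 \<Longrightarrow> 0 < poly (rescaled_quadratic 2 R) x"
proof -
  assume "R \<noteq> 0"
  have "poly (rescaled_quadratic 2 R) x = (x - R)\<^sup>2 + R\<^sup>2"
    by (simp add: rescaled_quadratic_def power2_eq_square algebra_simps)
  with \<open>R \<noteq> 0\<close> show ?thesis by (simp add: add_nonneg_pos)
qed

lemma
  assumes "R \<noteq> 0" "0 < e"
  shows poly_witness_poly_eq_0: "poly (witness_poly R e m) x = 0 \<longleftrightarrow> x \<in> {e, 2 * e} \<union> (\<lambda>i. - real i) ` {1..m}"
    and order_witness_poly: "poly (witness_poly R e m) x = 0 \<Longrightarrow> order x (witness_poly R e m) = 1"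
proof -
  let ?Z = "{e, 2 * e} \<union> (\<lambda>i. - real i) ` {1..m}"
  have F: "poly (rescaled_quadratic 2 R) x \<noteq> 0" for x
    using poly_rescaled_quadratic_2_pos[OF assms(1)] by (metis less_irrefl)
  have "finite ?Z" by simp
  note roots = roots_mult_prod_linear_factors[OF this F]
  show "poly (witness_poly R e m) x = 0 \<longleftrightarrow> x \<in> ?Z"
    unfolding witness_poly_eq_prod[OF assms(2)] by (rule roots(1))
  show "poly (witness_poly R e m) x = 0 \<Longrightarrow> order x (witness_poly R e m) = 1"
    unfolding witness_poly_eq_prod[OF assms(2)] using roots by blast
qed

lemma witness_poly_root_counts:
  assumes "R \<noteq> 0" "0 < e"
  shows "pos_roots (witness_poly R e m) = 2" "neg_roots (witness_poly R e m) = m"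
proof -
  have "{x. 0 < x \<and> poly (witness_poly R e m) x = 0} = {e, 2 * e}"
    using assms by (auto simp: poly_witness_poly_eq_0)
  then show "pos_roots (witness_poly R e m) = 2" using assms by (simp add: pos_roots_def)
  have "{x. x < 0 \<and> poly (witness_poly R e m) x = 0} = (\<lambda>i. - real i) ` {1..m}"
    using assms by (auto simp: poly_witness_poly_eq_0)
  then show "neg_roots (witness_poly R e m) = m" by (simp add: neg_roots_def card_image inj_on_def)
qed

lemma small_pos_root_witness_poly:
  assumes "R \<noteq> 0" "0 < e" "1 \<le> m"
  shows "small_pos_root (witness_poly R e m) \<longleftrightarrow> e < real m"
proof
  assume "small_pos_root (witness_poly R e m)"
  then obtain y z where "poly (witness_poly R e m) y = 0" "poly (witness_poly R e m) z = 0" "0 < y" "y < - z"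
    unfolding small_pos_root_def by blast
  then show "e < real m" using assms by (auto simp: poly_witness_poly_eq_0)
next
  assume "e < real m"
  moreover have "poly (witness_poly R e m) e = 0" "poly (witness_poly R e m) (- real m) = 0"
    using assms by (auto simp: poly_witness_poly_eq_0)
  ultimately show "small_pos_root (witness_poly R e m)"
    using assms unfolding small_pos_root_def by (intro exI[of _ e] exI[of _ "- real m"]) auto
qed

lemma lead_coeff_witness_poly: "lead_coeff (witness_poly R e m) = 1"
  by (simp add: witness_poly_def lead_coeff_rescaled_quadratic_mult lead_coeff_prod del: mult_pCons_left)

lemma witness_poly_in_A_set:
  assumes "6 \<le> d" "R \<noteq> 0" "0 < e" and signs: "coeff_signs (witness_poly R e (d - 4)) = sigma_signs d"
  shows "\<exists>a\<in>A_set d. monic_poly d a = witness_poly R e (d - 4)"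
proof
  let ?Q = "witness_poly R e (d - 4)"
  define a where "a j = (if j < d then coeff ?Q j else 0)" for j
  have "degree ?Q = d" using arg_cong[OF signs, of length] assms(1) by (simp add: sigma_signs_def)
  then show "monic_poly d a = ?Q"
    unfolding a_def by (intro monic_poly_coeffs \<open>degree ?Q = d\<close> lead_coeff_witness_poly)
  moreover have "0 \<notin> set (sigma_signs d)" by (simp add: sigma_signs_def)
  then have "a j \<noteq> 0" if "j < d" for j
    using coeff_nonzero_if_coeff_signs[of ?Q j] signs that \<open>degree ?Q = d\<close> by (simp add: a_def)
  moreover have "sigma_bullet d a"
    using sigma_bullet_if_coeff_signs[OF signs] assms(1) by (simp add: sigma_bullet_def a_def)
  ultimately show "a \<in> A_set d"
    using order_witness_poly[OF assms(2,3)] witness_poly_root_counts[OF assms(2,3)]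
    by (simp add: A_set_def R3_def coeff_space_def a_def)
qed

lemma ex_witness_poly_small_roots:
  "\<exists>R e. R \<noteq> 0 \<and> 0 < e \<and> e < 1 \<and> coeff_signs (witness_poly R e m) = sigma_signs (m + 4)"
proof -
  let ?N = "\<Prod>c\<in>real ` {1..m}. [:c, 1:]"
  note N = coeff_signs_prod_integer_factors[of m]
  obtain e where "0 < e" "e < 1" and e: "coeff_signs (rescaled_quadratic 3 e * ?N) = [1, -1] @ replicate (Suc m) 1"
    using eventually_happens'[OF trivial_limit_at_right_real
        eventually_conj[OF eventually_at_right_less eventually_conj[OF eventually_less_at_right_0[of 1]
          eventually_coeff_signs_rescaled_quadratic_at_right_0[of 3 ?N]]]]
    unfolding N by auto
  obtain R where "0 < R" and R: "coeff_signs (rescaled_quadratic 2 R * (rescaled_quadratic 3 e * ?N)) =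
      [1, -1] @ replicate (Suc m) 1 @ [-1, 1]"
    using eventually_happens'[OF trivial_limit_at_top_linorder
        eventually_conj[OF eventually_gt_at_top[of 0]
          eventually_coeff_signs_rescaled_quadratic_at_top[of 2 "rescaled_quadratic 3 e * ?N"]]]
    unfolding e by auto
  then show ?thesis using \<open>0 < e\<close> \<open>e < 1\<close>
    by (intro exI[of _ R] exI[of _ e]) (simp add: witness_poly_def sigma_signs_def)
qed

lemma ex_witness_poly_large_roots:
  "\<exists>R L. R \<noteq> 0 \<and> real m < L \<and> coeff_signs (witness_poly R L m) = sigma_signs (m + 4)"
proof -
  let ?N = "\<Prod>c\<in>real ` {1..m}. [:c, 1:]"
  note N = coeff_signs_prod_integer_factors[of m]
  obtain L where "real m < L" and L: "coeff_signs (rescaled_quadratic 3 L * ?N) = replicate (Suc m) 1 @ [-1, 1]"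
    using eventually_happens'[OF trivial_limit_at_top_linorder
        eventually_conj[OF eventually_gt_at_top[of "real m"]
          eventually_coeff_signs_rescaled_quadratic_at_top[of 3 ?N]]]
    unfolding N by auto
  obtain R where "0 < R" and R: "coeff_signs (rescaled_quadratic 2 R * (rescaled_quadratic 3 L * ?N)) =
      [1, -1] @ replicate (Suc m) 1 @ [-1, 1]"
    using eventually_happens'[OF trivial_limit_at_right_real
        eventually_conj[OF eventually_at_right_less
          eventually_coeff_signs_rescaled_quadratic_at_right_0[of 2 "rescaled_quadratic 3 L * ?N"]]]
    unfolding L by auto
  then show ?thesis using \<open>real m < L\<close>
    by (intro exI[of _ R] exI[of _ L]) (simp add: witness_poly_def sigma_signs_def)
qed

lemma A_set_small_pos_root_cases:
  assumes "6 \<le> d"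
  shows "\<exists>a\<in>A_set d. small_pos_root (monic_poly d a)"
    and "\<exists>a\<in>A_set d. \<not> small_pos_root (monic_poly d a)"
proof -
  have d: "d = (d - 4) + 4" "1 \<le> d - 4" using assms by simp_all
  obtain R e where "R \<noteq> 0" "0 < e" "e < 1" and e: "coeff_signs (witness_poly R e (d - 4)) = sigma_signs d"
    using ex_witness_poly_small_roots[of "d - 4"] d(1) by metis
  moreover obtain a where "a \<in> A_set d" "monic_poly d a = witness_poly R e (d - 4)"
    using witness_poly_in_A_set[OF assms \<open>R \<noteq> 0\<close> \<open>0 < e\<close> e] by blast
  ultimately show "\<exists>a\<in>A_set d. small_pos_root (monic_poly d a)"
    using small_pos_root_witness_poly[of R e "d - 4"] d(2) by (intro bexI[of _ a]) auto
  obtain R L where "R \<noteq> 0" "real (d - 4) < L" and L: "coeff_signs (witness_poly R L (d - 4)) = sigma_signs d"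
    using ex_witness_poly_large_roots[of "d - 4"] d(1) by metis
  moreover from this have "0 < L" by simp
  moreover obtain a where "a \<in> A_set d" "monic_poly d a = witness_poly R L (d - 4)"
    using witness_poly_in_A_set[OF assms \<open>R \<noteq> 0\<close> \<open>0 < L\<close> L] by blast
  ultimately show "\<exists>a\<in>A_set d. \<not> small_pos_root (monic_poly d a)"
    using small_pos_root_witness_poly[of R L "d - 4"] d(2) by (intro bexI[of _ a]) auto
qed

theorem theorem1:
  fixes d :: nat
  assumes "d \<ge> 6"
  shows "A_set d \<noteq> {} \<and> \<not> connected (A_set d) \<and>
         (\<exists>\<C>. \<C> \<subseteq> components (R3 d) \<and> A_set d = \<Union>\<C> \<and>
              (\<exists>C1\<in>\<C>. \<exists>C2\<in>\<C>. C1 \<noteq> C2))"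
proof -
  obtain s t where "s \<in> A_set d" "small_pos_root (monic_poly d s)"
    and "t \<in> A_set d" "\<not> small_pos_root (monic_poly d t)"
    using A_set_small_pos_root_cases[OF assms] by blast
  moreover have "A_set d \<subseteq> R3 d" by (auto simp: A_set_def)
  ultimately show ?thesis
    using split_into_components[OF _ locally_constant_on_R3_A_set[OF assms], of s t] by blast
qed

end
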